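(* Let $G$ be a framed $4$-graph with exactly one unicursal component. Then, as an element of $\mathbb{Z}_2\mathfrak{G}$, $G$ has a unique (up to isomorphism of framed $4$-graphs) irreducible representative, i.e. a framed $4$-graph equivalent to $G$ by second Reidemeister moves to which no decreasing second Reidemeister move can be applied, and this representative can be obtained from $G$ by successively applying decreasing second Reidemeister moves. Let $G$ be an arbitrary framed $4$-graph. Then, as an element of $\widetilde{\mathbb{Z}_2\mathfrak{G}}$, $G$ is either equal to $0$ or has a unique (up to isomorphism) irreducible representative, i.e. a framed $4$-graph without circle components, equivalent to $G$ by second Reidemeister moves, to which no decreasing second Reidemeister move can be applied. In both cases the reduction can be carried out by successively applying decreasing second Reidemeister moves to $G$, and if at some stage a graph with a circle component (free loop) is obtained, then $G=0$ in $\widetilde{\mathbb{Z}_2\mathfrak{G}}$.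
   Context: A $4$-graph is a topological space with finitely many components, each of which is either a circle or a finite graph (loops and multiple edges allowed) all of whose vertices have valency four. It is framed if at each vertex the four emanating half-edges are split into two pairs of (formally) opposite half-edges. Circle components are called free loops. A unicursal component is either a circle component or an equivalence class of edges under the relation generated by: edges $a,b$ are equivalent if they are opposite at some vertex. Second Reidemeister move (decreasing version): suppose $u\neq v$ are vertices joined by two edges $e_1,e_2$ such that $e_1,e_2$ are not opposite at $u$ and not opposite at $v$. Delete $u,v,e_1,e_2$, and join the half-edge opposite to $e_1$ at $u$ with the half-edge opposite to $e_1$ at $v$, and the half-edge opposite to $e_2$ at $u$ with the half-edge opposite to $e_2$ at $v$ (the result is again a framed $4$-graph, possibly with new circle components). The increasing version is the inverse operation (it may be applied to any two edges). $\mathfrak{G}$ denotes the set of equivalence classes, modulo second Reidemeister moves, of framed $4$-graphs with one unicursal component, and $\mathbb{Z}_2\mathfrak{G}$ is the $\mathbb{Z}_2$-vector space with basis $\mathfrak{G}$. $\widetilde{\mathbb{Z}_2\mathfrak{G}}$ is the $\mathbb{Z}_2$-vector space spanned by equivalence classes of framed $4$-graphs (with any number of components) modulo second Reidemeister moves, in which every graph having a circle component is set equal to $0$. A framed graph in $\mathbb{Z}_2\mathfrak{G}$ is irreducible if no decreasing second Reidemeister move applies to it; in $\widetilde{\mathbb{Z}_2\mathfrak{G}}$ it is irreducible if it has no circle components and no decreasing second Reidemeister move applies to it. *)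

theory Defs
  imports Main
begin

text \<open>A framed 4-graph, encoded by half-edges (flags).
  fg_hes: the finite set of half-edges;
  fg_ed: pairs the two half-edges of each edge (fixed-point-free involution);
  fg_opp: pairs formally opposite half-edges at a vertex (fixed-point-free involution);
  fg_vx: vertex label of a half-edge (each vertex carries exactly four half-edges);
  fg_circ: number of circle components (free loops).
  Values of the functions outside fg_hes are irrelevant.\<close>

record fgraph =
  fg_hes :: "nat set"
  fg_ed :: "nat \<Rightarrow> nat"
  fg_opp :: "nat \<Rightarrow> nat"
  fg_vx :: "nat \<Rightarrow> nat"
  fg_circ :: nat

definition fg_wf :: "fgraph \<Rightarrow> bool" where
  "fg_wf G \<longleftrightarrow> finite (fg_hes G) \<and>
     (\<forall>h\<in>fg_hes G. fg_ed G h \<in> fg_hes G \<and> fg_ed G h \<noteq> h \<and> fg_ed G (fg_ed G h) = h) \<and>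
     (\<forall>h\<in>fg_hes G. fg_opp G h \<in> fg_hes G \<and> fg_opp G h \<noteq> h \<and> fg_opp G (fg_opp G h) = h) \<and>
     (\<forall>h\<in>fg_hes G. fg_vx G (fg_opp G h) = fg_vx G h) \<and>
     (\<forall>h\<in>fg_hes G. card {h'\<in>fg_hes G. fg_vx G h' = fg_vx G h} = 4)"

definition fg_iso :: "fgraph \<Rightarrow> fgraph \<Rightarrow> bool" where
  "fg_iso G G' \<longleftrightarrow> fg_circ G = fg_circ G' \<and>
     (\<exists>f. bij_betw f (fg_hes G) (fg_hes G') \<and>
        (\<forall>h\<in>fg_hes G. f (fg_ed G h) = fg_ed G' (f h)) \<and>
        (\<forall>h\<in>fg_hes G. f (fg_opp G h) = fg_opp G' (f h)) \<and>
        (\<forall>h\<in>fg_hes G. \<forall>h'\<in>fg_hes G. fg_vx G h = fg_vx G h' \<longleftrightarrow> fg_vx G' (f h) = fg_vx G' (f h')))"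

text \<open>Unicursal components: half-edges are linked along edges and to their opposites.\<close>
definition fg_link :: "fgraph \<Rightarrow> (nat \<times> nat) set" where
  "fg_link G = {(h, fg_ed G h) | h. h \<in> fg_hes G} \<union> {(h, fg_opp G h) | h. h \<in> fg_hes G}"

definition fg_comp :: "fgraph \<Rightarrow> nat \<Rightarrow> nat set" where
  "fg_comp G x = {y. (x, y) \<in> (fg_link G)\<^sup>*}"

definition fg_ucomp :: "fgraph \<Rightarrow> nat" where
  "fg_ucomp G = fg_circ G + card (fg_comp G ` fg_hes G)"

text \<open>A site of a decreasing second Reidemeister move: half-edges a1,a2 at vertex u,
  b1,b2 at vertex v (u \<noteq> v), edges e1 = {a1,b1}, e2 = {a2,b2}, not opposite at u nor at v.\<close>
definition r2_site :: "fgraph \<Rightarrow> nat \<Rightarrow> nat \<Rightarrow> nat \<Rightarrow> nat \<Rightarrow> bool" where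
  "r2_site G a1 a2 b1 b2 \<longleftrightarrow> fg_wf G \<and> {a1, a2, b1, b2} \<subseteq> fg_hes G \<and>
     fg_vx G a1 = fg_vx G a2 \<and> fg_vx G b1 = fg_vx G b2 \<and> fg_vx G a1 \<noteq> fg_vx G b1 \<and>
     fg_ed G a1 = b1 \<and> fg_ed G a2 = b2 \<and> a1 \<noteq> a2 \<and>
     a2 \<noteq> fg_opp G a1 \<and> b2 \<noteq> fg_opp G b1"

definition r2_del :: "fgraph \<Rightarrow> nat \<Rightarrow> nat \<Rightarrow> nat \<Rightarrow> nat \<Rightarrow> nat set" where
  "r2_del G a1 a2 b1 b2 = {a1, fg_opp G a1, a2, fg_opp G a2, b1, fg_opp G b1, b2, fg_opp G b2}"

text \<open>Result of the move: delete the half-edges at u and v; each remaining half-edge h is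
  joined to the first remaining half-edge reached by following the strand from h
  (along edges, and straight through the deleted vertices). Unicursal components lying
  entirely at u and v become new circle components.\<close>
definition r2_result :: "fgraph \<Rightarrow> nat set \<Rightarrow> fgraph" where
  "r2_result G D =
     \<lparr> fg_hes = fg_hes G - D,
       fg_ed = (\<lambda>h. ((\<lambda>x. fg_ed G (fg_opp G x)) ^^
                 (LEAST k. ((\<lambda>x. fg_ed G (fg_opp G x)) ^^ k) (fg_ed G h) \<notin> D)) (fg_ed G h)),
       fg_opp = fg_opp G,
       fg_vx = fg_vx G,
       fg_circ = fg_circ G + card {fg_comp G x | x. x \<in> D \<and> fg_comp G x \<subseteq> D} \<rparr>"

definition r2dec :: "fgraph \<Rightarrow> fgraph \<Rightarrow> bool" where
  "r2dec G G' \<longleftrightarrow> (\<exists>a1 a2 b1 b2. r2_site G a1 a2 b1 b2 \<and>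
                    G' = r2_result G (r2_del G a1 a2 b1 b2))"

definition r2eq :: "fgraph \<Rightarrow> fgraph \<Rightarrow> bool" where
  "r2eq = equivclp (\<lambda>G G'. fg_wf G \<and> fg_wf G' \<and> (fg_iso G G' \<or> r2dec G G'))"

definition r2_irreducible :: "fgraph \<Rightarrow> bool" where
  "r2_irreducible G \<longleftrightarrow> \<not> (\<exists>G'. r2dec G G')"

definition r2_irreducible_tilde :: "fgraph \<Rightarrow> bool" where
  "r2_irreducible_tilde G \<longleftrightarrow> fg_circ G = 0 \<and> \<not> (\<exists>G'. r2dec G G')"

text \<open>G = 0 in the tilde space: its R2-class contains a graph with a circle component.\<close>
definition zero_tilde :: "fgraph \<Rightarrow> bool" where
  "zero_tilde G \<longleftrightarrow> (\<exists>G'. r2eq G G' \<and> 0 < fg_circ G')"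

end

theory Submission
  imports Defs
begin

text \<open>A decreasing second Reidemeister move deletes the half-edges at two vertices and joins
  every surviving half-edge to the first surviving one met along its strand; it decreases the
  number of half-edges, so reduction terminates. Two moves at disjoint sites commute, since both
  orders amount to deleting the union of the sites. Two sites sharing a vertex v give isomorphic
  results: once v is deleted, the other two vertices are joined by two edges, and deleting either
  of them leads to the same graph up to exchanging the two vertices. Hence the moves are locally
  confluent up to isomorphism, and Newman's lemma modulo isomorphism gives every class a unique
  irreducible representative, reached by decreasing moves. Moves only ever create free loops and
  isomorphisms preserve them, so a class contains a graph with a free loop exactly when its
  irreducible representative has one.\<close>

section \<open>Newman's lemma modulo an equivalence\<close>

locale terminating_rewriting_modulo =
  fixes A :: "'a set" and r :: "'a \<Rightarrow> 'a \<Rightarrow> bool" and eqv :: "'a \<Rightarrow> 'a \<Rightarrow> bool"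
    and size :: "'a \<Rightarrow> nat"
  assumes step_in: "r x y \<Longrightarrow> x \<in> A \<and> y \<in> A"
    and step_size: "r x y \<Longrightarrow> size y < size x"
    and eqv_refl: "eqv x x"
    and eqv_sym: "eqv x y \<Longrightarrow> x \<in> A \<Longrightarrow> y \<in> A \<Longrightarrow> eqv y x"
    and eqv_trans: "eqv x y \<Longrightarrow> eqv y z \<Longrightarrow> eqv x z"
    and step_eqv: "eqv x x' \<Longrightarrow> x' \<in> A \<Longrightarrow> r x y \<Longrightarrow> \<exists>y'. r x' y' \<and> eqv y y'"
    and local_confluence: "r x y1 \<Longrightarrow> r x y2 \<Longrightarrow> \<exists>z1 z2. r\<^sup>*\<^sup>* y1 z1 \<and> r\<^sup>*\<^sup>* y2 z2 \<and> eqv z1 z2"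
begin

abbreviation normal_form :: "'a \<Rightarrow> 'a \<Rightarrow> bool" where
  "normal_form x n \<equiv> r\<^sup>*\<^sup>* x n \<and> \<not> (\<exists>y. r n y)"

lemma steps_in: "r\<^sup>*\<^sup>* x y \<Longrightarrow> x \<in> A \<Longrightarrow> y \<in> A"
  by (induction rule: rtranclp_induct) (auto dest: step_in)

lemma normal_form_exists: "\<exists>n. normal_form x n"
proof (induction "size x" arbitrary: x rule: less_induct)
  case less
  show ?case
  proof (cases "\<exists>y. r x y")
    case True
    then obtain y where "r x y" by blast
    moreover obtain n where "normal_form y n" using less step_size[OF \<open>r x y\<close>] by blast
    ultimately show ?thesis by (meson converse_rtranclp_into_rtranclp)
  qed blast
qed

lemma steps_eqv:
  "r\<^sup>*\<^sup>* x y \<Longrightarrow> eqv x x' \<Longrightarrow> x' \<in> A \<Longrightarrow> \<exists>y'. r\<^sup>*\<^sup>* x' y' \<and> eqv y y'"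
proof (induction rule: rtranclp_induct)
  case (step y z)
  then obtain y' where y': "r\<^sup>*\<^sup>* x' y'" "eqv y y'" by blast
  moreover have "y' \<in> A" using steps_in y'(1) step.prems by blast
  ultimately obtain z' where "r y' z'" "eqv z z'" using step_eqv step.hyps(2) by blast
  then show ?case using y' by (meson rtranclp.rtrancl_into_rtrancl)
qed blast

lemma irreducible_eqv:
  "eqv n n' \<Longrightarrow> n \<in> A \<Longrightarrow> n' \<in> A \<Longrightarrow> \<not> (\<exists>y. r n y) \<Longrightarrow> \<not> (\<exists>y. r n' y)"
  using step_eqv eqv_sym by blast

lemma normal_form_eqv:
  assumes "normal_form x n" "eqv x x'" "x \<in> A" "x' \<in> A"
  obtains n' where "normal_form x' n'" "eqv n n'"
proof -
  obtain n' where "r\<^sup>*\<^sup>* x' n'" "eqv n n'" using steps_eqv assms by blast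
  moreover have "n \<in> A" "n' \<in> A" using steps_in assms \<open>r\<^sup>*\<^sup>* x' n'\<close> by blast+
  ultimately have "\<not> (\<exists>y. r n' y)" using irreducible_eqv assms(1) by blast
  then show ?thesis using that \<open>r\<^sup>*\<^sup>* x' n'\<close> \<open>eqv n n'\<close> by blast
qed

lemma normal_form_unique:
  "x \<in> A \<Longrightarrow> normal_form x n1 \<Longrightarrow> normal_form x n2 \<Longrightarrow> eqv n1 n2"
proof (induction "size x" arbitrary: x n1 n2 rule: less_induct)
  case less
  have "x = n1 \<or> (\<exists>y1. r x y1 \<and> r\<^sup>*\<^sup>* y1 n1)"
    by (rule converse_rtranclpE[OF less.prems(2)[THEN conjunct1]]) blast+
  moreover have "x = n2 \<or> (\<exists>y2. r x y2 \<and> r\<^sup>*\<^sup>* y2 n2)"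
    by (rule converse_rtranclpE[OF less.prems(3)[THEN conjunct1]]) blast+
  ultimately show ?case
  proof (elim disjE exE conjE)
    assume "x = n1" "x = n2" then show ?thesis using eqv_refl by simp
  next
    fix y1 y2 assume y1: "r x y1" "r\<^sup>*\<^sup>* y1 n1" and y2: "r x y2" "r\<^sup>*\<^sup>* y2 n2"
    obtain z1 z2 where z: "r\<^sup>*\<^sup>* y1 z1" "r\<^sup>*\<^sup>* y2 z2" "eqv z1 z2"
      using local_confluence[OF y1(1) y2(1)] by blast
    have A: "y1 \<in> A" "y2 \<in> A" "z1 \<in> A" "z2 \<in> A"
      using step_in y1(1) y2(1) steps_in z by blast+
    obtain m where m: "normal_form z1 m" using normal_form_exists by blast
    obtain m' where m': "normal_form z2 m'" "eqv m m'"
      using normal_form_eqv[OF m z(3) A(3,4)] by blast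
    have "eqv n1 m"
      using less.hyps[OF step_size[OF y1(1)] A(1)] less.prems y1(2) m z(1) by (meson rtranclp_trans)
    moreover have "eqv m' n2"
      using less.hyps[OF step_size[OF y2(1)] A(2)] less.prems y2(2) m' z(2) by (meson rtranclp_trans)
    ultimately show ?thesis using m'(2) eqv_trans by blast
  qed (use less.prems in blast)+
qed

lemma normal_forms_eqv:
  assumes "eqv x y" "x \<in> A" "y \<in> A" "normal_form x n" "normal_form y n'"
  shows "eqv n n'"
proof -
  obtain m where "normal_form y m" "eqv n m" using normal_form_eqv assms(1-4) by blast
  moreover have "eqv m n'" using normal_form_unique assms(3,5) \<open>normal_form y m\<close> by blast
  ultimately show ?thesis using eqv_trans by blast
qed

abbreviation equiv_steps :: "'a \<Rightarrow> 'a \<Rightarrow> bool" where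
  "equiv_steps \<equiv> equivclp (\<lambda>x y. x \<in> A \<and> y \<in> A \<and> (eqv x y \<or> r x y))"

lemma equiv_steps_normal_form:
  assumes "equiv_steps x y" "x \<in> A"
  shows "y \<in> A \<and> (\<forall>n n'. normal_form x n \<longrightarrow> normal_form y n' \<longrightarrow> eqv n n')"
  using assms(1)
proof (induction rule: equivclp_induct)
  case base then show ?case using normal_form_unique assms(2) by blast
next
  case (step y z)
  have A: "y \<in> A" "z \<in> A" using step by blast+
  obtain m where m: "normal_form y m" using normal_form_exists by blast
  have "eqv m n'" if n': "normal_form z n'" for n'
    using step.hyps(2)
  proof (elim disjE conjE)
    assume "eqv y z" then show ?thesis using normal_forms_eqv A m n' by blast
  next
    assume "eqv z y" then show ?thesis using normal_forms_eqv eqv_sym A m n' by blast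
  next
    assume "r y z" then have "normal_form y n'" using n' by (meson converse_rtranclp_into_rtranclp)
    then show ?thesis using normal_form_unique A m by blast
  next
    assume "r z y" then have "normal_form z m" using m by (meson converse_rtranclp_into_rtranclp)
    then show ?thesis using normal_form_unique A n' by blast
  qed
  then show ?case using step.IH m A eqv_trans by blast
qed

lemma steps_equiv_steps: "r\<^sup>*\<^sup>* x y \<Longrightarrow> equiv_steps x y"
proof (induction rule: rtranclp_induct)
  case (step y z)
  then have "equiv_steps y z" using step_in by (blast intro: r_into_equivclp)
  then show ?case using step.IH by (rule equivclp_trans[rotated])
qed simp

end

section \<open>Strands\<close>

text \<open>A strand enters a vertex at x, leaves it straight through at opp x, and enters the next
  vertex at ed (opp x).\<close>

definition strand_succ :: "fgraph \<Rightarrow> nat \<Rightarrow> nat" where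
  "strand_succ G x = fg_ed G (fg_opp G x)"

text \<open>Junk (LEAST of an empty set) when the strand of x never leaves D; every use below supplies
  an exit.\<close>

definition next_outside :: "fgraph \<Rightarrow> nat set \<Rightarrow> nat \<Rightarrow> nat" where
  "next_outside G D x = (strand_succ G ^^ (LEAST j. 0 < j \<and> (strand_succ G ^^ j) x \<notin> D)) x"

lemma funpow_diff_apply: "j \<le> n \<Longrightarrow> (f ^^ (n - j)) ((f ^^ j) x) = (f ^^ n) x"
  by (metis funpow_add le_add_diff_inverse2 o_apply)

lemma next_outside_eqI:
  assumes "0 < n" "(strand_succ G ^^ n) x \<notin> D"
    and "\<And>j. 0 < j \<Longrightarrow> j < n \<Longrightarrow> (strand_succ G ^^ j) x \<in> D"
  shows "next_outside G D x = (strand_succ G ^^ n) x"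
proof -
  have "(LEAST j. 0 < j \<and> (strand_succ G ^^ j) x \<notin> D) = n"
    by (rule Least_equality) (use assms not_less in auto)
  then show ?thesis unfolding next_outside_def by simp
qed

lemma next_outside_exists:
  assumes "\<exists>n>0. (strand_succ G ^^ n) x \<notin> D"
  obtains n where "0 < n" "(strand_succ G ^^ n) x \<notin> D"
    "\<And>j. 0 < j \<Longrightarrow> j < n \<Longrightarrow> (strand_succ G ^^ j) x \<in> D"
    "next_outside G D x = (strand_succ G ^^ n) x"
proof -
  let ?n = "LEAST j. 0 < j \<and> (strand_succ G ^^ j) x \<notin> D"
  have "0 < ?n \<and> (strand_succ G ^^ ?n) x \<notin> D" using assms by (metis (mono_tags, lifting) LeastI)
  moreover have "\<And>j. 0 < j \<Longrightarrow> j < ?n \<Longrightarrow> (strand_succ G ^^ j) x \<in> D" using not_less_Least by blast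
  ultimately show ?thesis using that unfolding next_outside_def by blast
qed

lemma next_outside_succ_notin: "strand_succ G x \<notin> D \<Longrightarrow> next_outside G D x = strand_succ G x"
  using next_outside_eqI[of 1 G x D] by simp

lemma next_outside_succ_in:
  assumes "\<exists>n>0. (strand_succ G ^^ n) x \<notin> D" "strand_succ G x \<in> D"
  shows "next_outside G D x = next_outside G D (strand_succ G x)"
proof -
  obtain n where n: "0 < n" "(strand_succ G ^^ n) x \<notin> D"
      "\<And>j. 0 < j \<Longrightarrow> j < n \<Longrightarrow> (strand_succ G ^^ j) x \<in> D"
      "next_outside G D x = (strand_succ G ^^ n) x"
    using next_outside_exists[OF assms(1)] by blast
  have "1 < n" using n assms(2) by (cases "n = 1") auto
  have shift: "(strand_succ G ^^ k) (strand_succ G x) = (strand_succ G ^^ Suc k) x" for k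
    by (simp only: funpow_Suc_right o_apply)
  have "next_outside G D (strand_succ G x) = (strand_succ G ^^ (n - 1)) (strand_succ G x)"
  proof (rule next_outside_eqI)
    show "0 < n - 1" using \<open>1 < n\<close> by simp
    show "(strand_succ G ^^ (n - 1)) (strand_succ G x) \<notin> D"
      using n(2) \<open>1 < n\<close> by (simp add: shift)
    show "(strand_succ G ^^ j) (strand_succ G x) \<in> D" if "0 < j" "j < n - 1" for j
      using n(3)[of "Suc j"] that by (simp add: shift)
  qed
  also have "\<dots> = (strand_succ G ^^ n) x" using \<open>1 < n\<close> by (simp add: shift)
  finally show ?thesis using n by simp
qed

locale fgraph_wf =
  fixes G :: fgraph
  assumes wf: "fg_wf G"
begin

abbreviation "H \<equiv> fg_hes G"
abbreviation "ed \<equiv> fg_ed G"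
abbreviation "opp \<equiv> fg_opp G"
abbreviation "succ \<equiv> strand_succ G"

lemma finite_hes: "finite H" using wf unfolding fg_wf_def by blast
lemma ed_in: "h \<in> H \<Longrightarrow> ed h \<in> H" using wf unfolding fg_wf_def by blast
lemma ed_neq: "h \<in> H \<Longrightarrow> ed h \<noteq> h" using wf unfolding fg_wf_def by blast
lemma ed_ed [simp]: "h \<in> H \<Longrightarrow> ed (ed h) = h" using wf unfolding fg_wf_def by blast
lemma opp_in: "h \<in> H \<Longrightarrow> opp h \<in> H" using wf unfolding fg_wf_def by blast
lemma opp_neq: "h \<in> H \<Longrightarrow> opp h \<noteq> h" using wf unfolding fg_wf_def by blast
lemma opp_opp [simp]: "h \<in> H \<Longrightarrow> opp (opp h) = h" using wf unfolding fg_wf_def by blast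
lemma vx_opp: "h \<in> H \<Longrightarrow> fg_vx G (opp h) = fg_vx G h" using wf unfolding fg_wf_def by blast
lemma card_vertex: "h \<in> H \<Longrightarrow> card {h'\<in>H. fg_vx G h' = fg_vx G h} = 4"
  using wf unfolding fg_wf_def by blast

lemma vertex_eq:
  assumes "a \<in> H" "b \<in> H" "fg_vx G b = fg_vx G a" "b \<noteq> a" "b \<noteq> opp a"
  shows "{h\<in>H. fg_vx G h = fg_vx G a} = {a, opp a, b, opp b}"
proof -
  have "{a, opp a, b, opp b} \<subseteq> {h\<in>H. fg_vx G h = fg_vx G a}"
    using assms opp_in vx_opp by auto
  moreover have "card {a, opp a, b, opp b} = 4"
  proof -
    have "opp b \<noteq> a" "opp b \<noteq> opp a" using assms opp_opp by metis+
    then show ?thesis using assms opp_neq[of a] opp_neq[of b] by simp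
  qed
  ultimately show ?thesis
    using card_subset_eq card_vertex[OF assms(1)] finite_hes by (metis (no_types, lifting) finite_subset mem_Collect_eq subsetI)
qed

lemma succ_in: "x \<in> H \<Longrightarrow> succ x \<in> H"
  unfolding strand_succ_def by (simp add: ed_in opp_in)

lemma succ_pow_in: "x \<in> H \<Longrightarrow> (succ ^^ n) x \<in> H"
  by (induction n) (auto simp: succ_in)

lemma succ_opp: "h \<in> H \<Longrightarrow> succ (opp h) = ed h"
  unfolding strand_succ_def by simp

lemma succ_opp_succ: "x \<in> H \<Longrightarrow> succ (opp (succ x)) = opp x"
  unfolding strand_succ_def by (simp add: opp_in ed_in)

lemma inj_on_succ: "inj_on succ H"
  unfolding inj_on_def strand_succ_def by (metis opp_in opp_opp ed_ed)

lemma succ_pow_inj: "x \<in> H \<Longrightarrow> y \<in> H \<Longrightarrow> (succ ^^ n) x = (succ ^^ n) y \<Longrightarrow> x = y"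
  using inj_on_succ by (induction n) (auto simp: inj_on_def succ_pow_in)

text \<open>Following a strand backwards is following the opposite strand forwards.\<close>

lemma succ_pow_opp_succ_pow: "x \<in> H \<Longrightarrow> (succ ^^ n) (opp ((succ ^^ n) x)) = opp x"
proof (induction n arbitrary: x)
  case (Suc n)
  have "(succ ^^ Suc n) (opp ((succ ^^ Suc n) x)) = (succ ^^ n) (succ (opp (succ ((succ ^^ n) x))))"
    by (simp only: funpow_Suc_right o_apply funpow_swap1)
  also have "\<dots> = (succ ^^ n) (opp ((succ ^^ n) x))"
    using Suc.prems by (simp add: succ_opp_succ succ_pow_in)
  finally show ?case using Suc by simp
qed simp

lemma succ_pow_periodic:
  assumes "x \<in> H" obtains m where "0 < m" "(succ ^^ m) x = x"
proof -
  have "range (\<lambda>n. (succ ^^ n) x) \<subseteq> H" using succ_pow_in assms by auto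
  then have "\<not> inj (\<lambda>n. (succ ^^ n) x)"
    using finite_hes finite_subset finite_imageD infinite_UNIV_nat by blast
  then obtain i j where "i < j" "(succ ^^ i) x = (succ ^^ j) x"
    unfolding inj_def by (metis linorder_neqE_nat)
  moreover have "(succ ^^ (i + (j - i))) x = (succ ^^ i) ((succ ^^ (j - i)) x)"
    by (simp only: funpow_add o_apply)
  ultimately have "(succ ^^ i) ((succ ^^ (j - i)) x) = (succ ^^ i) x" by simp
  then have "(succ ^^ (j - i)) x = x" using succ_pow_inj succ_pow_in assms by blast
  then show ?thesis using that[of "j - i"] \<open>i < j\<close> by simp
qed

lemma succ_pow_exit: "x \<in> H \<Longrightarrow> (succ ^^ k) x \<notin> D \<Longrightarrow> \<exists>n>0. (succ ^^ n) x \<notin> D"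
proof -
  assume "x \<in> H" "(succ ^^ k) x \<notin> D"
  moreover obtain m where "0 < m" "(succ ^^ m) x = x" using succ_pow_periodic \<open>x \<in> H\<close> by blast
  ultimately show ?thesis
    by (intro exI[of _ "k + m"]) (simp add: funpow_add)
qed

lemma next_outside_succ:
  "y \<in> H \<Longrightarrow> succ y \<in> D \<Longrightarrow> (succ ^^ k) (succ y) \<notin> D \<Longrightarrow>
    next_outside G D y = next_outside G D (succ y)"
proof (rule next_outside_succ_in)
  assume "y \<in> H" "(succ ^^ k) (succ y) \<notin> D"
  moreover have "(succ ^^ Suc k) y = (succ ^^ k) (succ y)" by (simp only: funpow_Suc_right o_apply)
  ultimately show "\<exists>n>0. (succ ^^ n) y \<notin> D" using succ_pow_exit[of y "Suc k" D] by metis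
qed

text \<open>At the middle of a run from opp h to h an edge or a vertex would be its own opposite.\<close>

lemma succ_pow_opp_neq:
  assumes "h \<in> H" shows "(succ ^^ n) (opp h) \<noteq> h"
proof
  assume eq: "(succ ^^ n) (opp h) = h"
  define z where "z = (succ ^^ (n div 2)) (opp h)"
  have z: "z \<in> H" unfolding z_def by (simp add: succ_pow_in opp_in assms)
  have rev: "(succ ^^ (n div 2)) (opp z) = h"
    unfolding z_def using succ_pow_opp_succ_pow[of "opp h"] assms opp_in by simp
  show False
  proof (cases "even n")
    case True
    then have "n = n div 2 + n div 2" by presburger
    moreover have "(succ ^^ (n div 2 + n div 2)) (opp h) = (succ ^^ (n div 2)) z"
      unfolding z_def by (simp only: funpow_add o_apply)
    ultimately have "(succ ^^ (n div 2)) z = h" using eq by simp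
    then have "opp z = z" using succ_pow_inj[OF opp_in[OF z] z, of "n div 2"] rev by simp
    then show False using opp_neq z by simp
  next
    case False
    then have "n = n div 2 + Suc (n div 2)" by presburger
    moreover have "(succ ^^ (n div 2 + Suc (n div 2))) (opp h) = (succ ^^ (n div 2)) (succ z)"
      unfolding z_def by (simp only: funpow_add funpow.simps(2) o_apply)
    ultimately have "(succ ^^ (n div 2)) (succ z) = h" using eq by simp
    then have "opp z = succ z" using succ_pow_inj[OF opp_in[OF z] succ_in[OF z], of "n div 2"] rev by simp
    then have "ed (opp z) = opp z" unfolding strand_succ_def using z by simp
    then show False using ed_neq opp_in z by metis
  qed
qed

definition strand :: "nat \<Rightarrow> nat set" where
  "strand x = range (\<lambda>k. (succ ^^ k) x)"

lemma strand_subset: "x \<in> H \<Longrightarrow> strand x \<subseteq> H"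
  unfolding strand_def using succ_pow_in by blast

lemma strand_self: "x \<in> strand x"
  unfolding strand_def by (metis funpow_0 rangeI)

lemma succ_pow_in_strand: "(succ ^^ k) x \<in> strand x"
  unfolding strand_def by blast

lemma link_in_hes: "(a, b) \<in> fg_link G \<Longrightarrow> a \<in> H \<and> b \<in> H"
  unfolding fg_link_def using ed_in opp_in by blast

lemma strand_link_rtrancl: "x \<in> H \<Longrightarrow> y \<in> strand x \<Longrightarrow> (x, y) \<in> (fg_link G)\<^sup>*"
proof -
  assume x: "x \<in> H"
  have "(x, (succ ^^ k) x) \<in> (fg_link G)\<^sup>*" for k
  proof (induction k)
    case (Suc k)
    let ?y = "(succ ^^ k) x"
    have "(?y, opp ?y) \<in> fg_link G" "(opp ?y, ed (opp ?y)) \<in> fg_link G"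
      unfolding fg_link_def using succ_pow_in[OF x] opp_in by blast+
    moreover have "(succ ^^ Suc k) x = ed (opp ?y)" by (simp add: strand_succ_def)
    ultimately show ?case using Suc by (metis rtrancl_into_rtrancl)
  qed simp
  then show "y \<in> strand x \<Longrightarrow> (x, y) \<in> (fg_link G)\<^sup>*" unfolding strand_def by blast
qed

text \<open>Along a strand the edge partner of a half-edge is the reverse of its predecessor;
  periodicity makes that predecessor exist.\<close>

lemma ed_strand: assumes "x \<in> H" "y \<in> strand x" shows "ed y \<in> opp ` strand x"
proof -
  have y: "y \<in> H" using assms strand_subset by blast
  obtain k where k: "y = (succ ^^ k) x" using assms(2) unfolding strand_def by blast
  obtain m where m: "0 < m" "(succ ^^ m) x = x" using succ_pow_periodic assms(1) by blast
  let ?z = "(succ ^^ (k + m - 1)) x"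
  have "succ ?z = (succ ^^ (k + m)) x"
    using m(1) by (metis Suc_diff_1 add_gr_0 funpow.simps(2) o_apply)
  also have "\<dots> = y" using k m by (simp add: funpow_add)
  also have "\<dots> = succ (opp (ed y))" using succ_opp[OF ed_in[OF y]] y by simp
  finally have "opp (ed y) = ?z"
    by (rule inj_onD[OF inj_on_succ, symmetric]) (simp_all add: succ_pow_in assms(1) opp_in ed_in y)
  then have "ed y = opp ?z" using opp_opp[OF ed_in[OF y]] by simp
  then show ?thesis using succ_pow_in_strand by blast
qed

lemma ed_opp_strand: assumes "x \<in> H" "y \<in> strand x" shows "ed (opp y) \<in> strand x"
proof -
  obtain k where "y = (succ ^^ k) x" using assms(2) unfolding strand_def by blast
  then have "ed (opp y) = (succ ^^ Suc k) x" by (simp add: strand_succ_def)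
  then show ?thesis using succ_pow_in_strand by metis
qed

lemma comp_eq_strands: assumes x: "x \<in> H" shows "fg_comp G x = strand x \<union> opp ` strand x"
proof
  show "fg_comp G x \<subseteq> strand x \<union> opp ` strand x"
  proof
    fix z assume "z \<in> fg_comp G x"
    then have "(x, z) \<in> (fg_link G)\<^sup>*" unfolding fg_comp_def by simp
    then show "z \<in> strand x \<union> opp ` strand x"
    proof (induction rule: rtrancl_induct)
      case base then show ?case using strand_self by blast
    next
      case (step y z)
      have "y \<in> H" using step.hyps(2) link_in_hes by blast
      from step.IH show ?case
      proof
        assume "y \<in> strand x"
        then show ?case using step.hyps(2) ed_strand[OF x] unfolding fg_link_def by blast
      next
        assume "y \<in> opp ` strand x"
        then obtain w where w: "w \<in> strand x" "y = opp w" by blast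
        then have "w \<in> H" using x strand_subset by blast
        then have "z = ed y \<or> z = w" using step.hyps(2) w unfolding fg_link_def by auto
        then show ?case using w ed_opp_strand[OF x] by blast
      qed
    qed
  qed
  show "strand x \<union> opp ` strand x \<subseteq> fg_comp G x"
  proof
    fix z assume "z \<in> strand x \<union> opp ` strand x"
    then consider "z \<in> strand x" | w where "w \<in> strand x" "z = opp w" by blast
    then show "z \<in> fg_comp G x"
    proof cases
      case 1 then show ?thesis using strand_link_rtrancl x unfolding fg_comp_def by blast
    next
      case 2
      then have "(w, z) \<in> fg_link G" unfolding fg_link_def using x strand_subset by blast
      then show ?thesis using strand_link_rtrancl[OF x 2(1)] unfolding fg_comp_def by simp
    qed
  qed
qed

lemma comp_subset: "x \<in> H \<Longrightarrow> fg_comp G x \<subseteq> H"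
  using comp_eq_strands strand_subset opp_in by blast

lemma comp_self: "x \<in> fg_comp G x"
  unfolding fg_comp_def by simp

lemma comp_eq_if_mem: assumes "y \<in> fg_comp G x" shows "fg_comp G y = fg_comp G x"
proof -
  have "sym (fg_link G)" unfolding sym_def fg_link_def using ed_in opp_in by fastforce
  have xy: "(x, y) \<in> (fg_link G)\<^sup>*" using assms unfolding fg_comp_def by simp
  then have yx: "(y, x) \<in> (fg_link G)\<^sup>*"
    using sym_rtrancl[OF \<open>sym (fg_link G)\<close>] unfolding sym_def by blast
  show ?thesis unfolding fg_comp_def using xy yx by (meson rtrancl_trans)
qed

lemma succ_in_comp: "x \<in> H \<Longrightarrow> succ x \<in> fg_comp G x"
  using comp_eq_strands succ_pow_in_strand[of 1 x] by simp

lemma opp_in_comp: "x \<in> H \<Longrightarrow> opp x \<in> fg_comp G x"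
  using comp_eq_strands strand_self by blast

lemma r2_del_eq:
  assumes "r2_site G a1 a2 b1 b2"
  shows "r2_del G a1 a2 b1 b2 = {h\<in>H. fg_vx G h = fg_vx G a1 \<or> fg_vx G h = fg_vx G b1}"
proof -
  have s: "a1 \<in> H" "a2 \<in> H" "b1 \<in> H" "b2 \<in> H" "fg_vx G a1 = fg_vx G a2"
    "fg_vx G b1 = fg_vx G b2" "ed a1 = b1" "ed a2 = b2" "a1 \<noteq> a2" "a2 \<noteq> opp a1" "b2 \<noteq> opp b1"
    using assms unfolding r2_site_def by auto
  then have "b2 \<noteq> b1" by (metis ed_ed)
  then have "{h\<in>H. fg_vx G h = fg_vx G b1} = {b1, opp b1, b2, opp b2}"
    using vertex_eq[of b1 b2] s by simp
  moreover have "{h\<in>H. fg_vx G h = fg_vx G a1} = {a1, opp a1, a2, opp a2}"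
    using vertex_eq[of a1 a2] s by simp
  moreover have "{h\<in>H. fg_vx G h = fg_vx G a1 \<or> fg_vx G h = fg_vx G b1} =
      {h\<in>H. fg_vx G h = fg_vx G a1} \<union> {h\<in>H. fg_vx G h = fg_vx G b1}" by blast
  ultimately show ?thesis unfolding r2_del_def by auto
qed


lemma succ_pow_in_strandI: "y \<in> strand x \<Longrightarrow> (succ ^^ n) y \<in> strand x"
proof -
  assume "y \<in> strand x"
  then obtain k where "y = (succ ^^ k) x" unfolding strand_def by blast
  then have "(succ ^^ n) y = (succ ^^ (n + k)) x" by (simp add: funpow_add)
  then show ?thesis using succ_pow_in_strand by simp
qed

lemma strand_succ_subset: "strand (succ x) \<subseteq> strand x"
proof
  fix z assume "z \<in> strand (succ x)"
  then obtain k where "z = (succ ^^ k) (succ x)" unfolding strand_def by blast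
  then have "z = (succ ^^ Suc k) x" by (simp only: funpow_Suc_right o_apply)
  then show "z \<in> strand x" using succ_pow_in_strand by metis
qed


lemma succ_eq_iff: "x \<in> H \<Longrightarrow> y \<in> H \<Longrightarrow> succ x = y \<longleftrightarrow> opp x = ed y"
  unfolding strand_succ_def by (metis ed_ed opp_in)

end

section \<open>Deleting vertices\<close>

locale vertex_deletion = fgraph_wf +
  fixes D :: "nat set"
  assumes del_subset: "D \<subseteq> fg_hes G"
    and del_closed: "h \<in> D \<Longrightarrow> h' \<in> fg_hes G \<Longrightarrow> fg_vx G h' = fg_vx G h \<Longrightarrow> h' \<in> D"
begin

lemma opp_in_del_iff: "h \<in> H \<Longrightarrow> opp h \<in> D \<longleftrightarrow> h \<in> D"
  using del_closed vx_opp opp_in del_subset by (metis opp_opp subsetD)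

lemma exit_del: "x \<in> H \<Longrightarrow> x \<notin> D \<Longrightarrow> \<exists>n>0. (succ ^^ n) x \<notin> D"
  using succ_pow_exit[of x 0] by simp

lemma next_outside_in: "x \<in> H \<Longrightarrow> x \<notin> D \<Longrightarrow> next_outside G D x \<in> H"
  and next_outside_notin: "x \<in> H \<Longrightarrow> x \<notin> D \<Longrightarrow> next_outside G D x \<notin> D"
  by (metis next_outside_exists exit_del succ_pow_in)+

lemma r2_result_hes [simp]: "fg_hes (r2_result G D) = H - D"
  and r2_result_opp [simp]: "fg_opp (r2_result G D) = opp"
  and r2_result_vx [simp]: "fg_vx (r2_result G D) = fg_vx G"
  by (simp_all add: r2_result_def)

text \<open>The iteration in the definition of the new edge, started at the old partner ed h, is the
  strand walk from opp h shifted by one step.\<close>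

lemma r2_result_ed: assumes "h \<in> H" "h \<notin> D"
  shows "fg_ed (r2_result G D) h = next_outside G D (opp h)"
proof -
  obtain n where "0 < n" "(succ ^^ n) (opp h) \<notin> D"
    using exit_del opp_in opp_in_del_iff assms by blast
  have shift: "(succ ^^ Suc k) (opp h) = (succ ^^ k) (ed h)" for k
    by (simp only: funpow_Suc_right o_apply succ_opp[OF assms(1)])
  have "(LEAST j. 0 < j \<and> (succ ^^ j) (opp h) \<notin> D) =
      Suc (LEAST m. 0 < Suc m \<and> (succ ^^ Suc m) (opp h) \<notin> D)"
    by (rule Least_Suc) (use \<open>0 < n\<close> \<open>(succ ^^ n) (opp h) \<notin> D\<close> in simp_all)
  then have "next_outside G D (opp h) = (succ ^^ Suc (LEAST m. (succ ^^ m) (ed h) \<notin> D)) (opp h)"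
    unfolding next_outside_def by (simp only: shift) simp
  also have "\<dots> = (succ ^^ (LEAST m. (succ ^^ m) (ed h) \<notin> D)) (ed h)" by (simp only: shift)
  finally show ?thesis
    unfolding r2_result_def by (simp add: strand_succ_def[abs_def])
qed

text \<open>Walking back from the exit point retraces the same run through D.\<close>

lemma next_outside_opp_next_outside: assumes "h \<in> H" "h \<notin> D"
  shows "next_outside G D (opp (next_outside G D (opp h))) = h"
proof -
  have hop: "opp h \<in> H" "opp h \<notin> D" using assms opp_in opp_in_del_iff by auto
  obtain n where n: "0 < n" "(succ ^^ n) (opp h) \<notin> D"
      "\<And>j. 0 < j \<Longrightarrow> j < n \<Longrightarrow> (succ ^^ j) (opp h) \<in> D"
      "next_outside G D (opp h) = (succ ^^ n) (opp h)"
    using next_outside_exists[OF exit_del[OF hop]] by blast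
  have "next_outside G D (opp ((succ ^^ n) (opp h))) = (succ ^^ n) (opp ((succ ^^ n) (opp h)))"
  proof (rule next_outside_eqI)
    show "(succ ^^ n) (opp ((succ ^^ n) (opp h))) \<notin> D"
      using succ_pow_opp_succ_pow[OF hop(1)] assms by simp
    show "(succ ^^ j) (opp ((succ ^^ n) (opp h))) \<in> D" if "0 < j" "j < n" for j
    proof -
      have "(succ ^^ n) (opp h) = (succ ^^ j) ((succ ^^ (n - j)) (opp h))"
        using funpow_diff_apply[of "n - j" n succ "opp h"] that by simp
      then have "(succ ^^ j) (opp ((succ ^^ n) (opp h))) = opp ((succ ^^ (n - j)) (opp h))"
        using succ_pow_opp_succ_pow succ_pow_in hop by simp
      moreover have "(succ ^^ (n - j)) (opp h) \<in> D" using n that by simp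
      ultimately show ?thesis using opp_in_del_iff succ_pow_in hop by simp
    qed
  qed (use n in simp)
  then show ?thesis using n succ_pow_opp_succ_pow[OF hop(1)] assms by simp
qed

lemma next_outside_opp_neq: "h \<in> H \<Longrightarrow> h \<notin> D \<Longrightarrow> next_outside G D (opp h) \<noteq> h"
  by (metis next_outside_exists exit_del opp_in opp_in_del_iff succ_pow_opp_neq)

lemma r2_result_wf: "fg_wf (r2_result G D)"
proof -
  let ?e = "fg_ed (r2_result G D)"
  have ed_res: "?e h \<in> H - D" if "h \<in> H - D" for h
    using that r2_result_ed next_outside_in next_outside_notin opp_in opp_in_del_iff by auto
  have vertex: "{h' \<in> H - D. fg_vx G h' = fg_vx G h} = {h' \<in> H. fg_vx G h' = fg_vx G h}"
    if "h \<in> H - D" for h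
  proof (rule set_eqI, rule iffI)
    fix x assume "x \<in> {h' \<in> H. fg_vx G h' = fg_vx G h}"
    then show "x \<in> {h' \<in> H - D. fg_vx G h' = fg_vx G h}" using that del_closed[of x h] by auto
  qed auto
  show ?thesis unfolding fg_wf_def r2_result_hes r2_result_opp r2_result_vx
  proof (intro conjI ballI)
    fix h assume h: "h \<in> H - D"
    show "?e h \<in> H - D" by (rule ed_res[OF h])
    show "?e h \<noteq> h" using h r2_result_ed next_outside_opp_neq by simp
    show "?e (?e h) = h"
      using h ed_res[OF h] r2_result_ed next_outside_opp_next_outside by simp
    show "opp h \<in> H - D" using h opp_in opp_in_del_iff by blast
    show "card {h' \<in> H - D. fg_vx G h' = fg_vx G h} = 4" using vertex[OF h] card_vertex h by simp
  qed (use finite_hes opp_neq vx_opp in auto)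
qed

sublocale R: fgraph_wf "r2_result G D"
  by (rule fgraph_wf.intro[OF r2_result_wf])

lemma strand_succ_r2_result: "x \<in> H \<Longrightarrow> x \<notin> D \<Longrightarrow> R.succ x = next_outside G D x"
  unfolding strand_succ_def[of "r2_result G D"]
  using r2_result_ed[of "opp x"] opp_in opp_in_del_iff by simp

lemma strand_r2_result: assumes "x \<in> H" "x \<notin> D" shows "R.strand x = strand x - D"
proof
  have "(R.succ ^^ k) x \<in> strand x - D" for k
  proof (induction k)
    case 0 then show ?case using assms strand_self by simp
  next
    case (Suc k)
    let ?y = "(R.succ ^^ k) x"
    have y: "?y \<in> H" "?y \<notin> D" using Suc strand_subset assms by auto
    obtain n where "next_outside G D ?y = (succ ^^ n) ?y"
      using next_outside_exists[OF exit_del[OF y]] by blast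
    then show ?case
      using Suc succ_pow_in_strandI strand_succ_r2_result[OF y] next_outside_notin[OF y] by auto
  qed
  then show "R.strand x \<subseteq> strand x - D" unfolding R.strand_def by blast
next
  have "(succ ^^ n) x \<in> R.strand x" if "x \<in> H" "x \<notin> D" "(succ ^^ n) x \<notin> D" for n x
    using that
  proof (induction n arbitrary: x rule: less_induct)
    case (less n)
    show ?case
    proof (cases "n = 0")
      case True then show ?thesis using R.strand_self by simp
    next
      case False
      obtain j where j: "0 < j" "(succ ^^ j) x \<notin> D"
          "\<And>i. 0 < i \<Longrightarrow> i < j \<Longrightarrow> (succ ^^ i) x \<in> D" "next_outside G D x = (succ ^^ j) x"
        using next_outside_exists[OF exit_del[OF less.prems(1,2)]] by blast
      have "j \<le> n" using j(3) False less.prems(3) by (meson not_le neq0_conv)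
      then have shift: "(succ ^^ (n - j)) ((succ ^^ j) x) = (succ ^^ n) x" by (rule funpow_diff_apply)
      have "(succ ^^ (n - j)) ((succ ^^ j) x) \<in> R.strand ((succ ^^ j) x)"
        using less.IH[of "n - j" "(succ ^^ j) x"] j(1,2) False less.prems shift succ_pow_in by simp
      moreover have "(succ ^^ j) x = R.succ x"
        using strand_succ_r2_result less.prems j(4) by simp
      ultimately show ?thesis using shift R.strand_succ_subset by auto
    qed
  qed
  then show "strand x - D \<subseteq> R.strand x" using assms unfolding strand_def by blast
qed

lemma comp_r2_result: assumes "x \<in> H" "x \<notin> D"
  shows "fg_comp (r2_result G D) x = fg_comp G x - D"
proof -
  have "fg_comp (r2_result G D) x = R.strand x \<union> opp ` R.strand x"
    using R.comp_eq_strands assms by simp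
  also have "\<dots> = (strand x - D) \<union> opp ` (strand x - D)" using strand_r2_result[OF assms] by simp
  also have "\<dots> = (strand x \<union> opp ` strand x) - D"
    using opp_in_del_iff strand_subset[OF assms(1)] by auto
  finally show ?thesis using comp_eq_strands[OF assms(1)] by simp
qed

end

definition enclosed_comps :: "fgraph \<Rightarrow> nat set \<Rightarrow> nat set set" where
  "enclosed_comps G D = {fg_comp G x | x. x \<in> D \<and> fg_comp G x \<subseteq> D}"

lemma fg_circ_r2_result: "fg_circ (r2_result G D) = fg_circ G + card (enclosed_comps G D)"
  unfolding r2_result_def enclosed_comps_def by simp

lemma fg_iso_idI:
  assumes "fg_circ A = fg_circ B" "fg_hes A = fg_hes B"
    "\<And>h. h \<in> fg_hes A \<Longrightarrow> fg_ed A h = fg_ed B h"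
    "\<And>h. h \<in> fg_hes A \<Longrightarrow> fg_opp A h = fg_opp B h"
    "\<And>h. h \<in> fg_hes A \<Longrightarrow> fg_vx A h = fg_vx B h"
  shows "fg_iso A B"
  unfolding fg_iso_def using assms by (intro conjI exI[of _ id]) (auto simp: bij_betw_def)

context fgraph_wf
begin

lemma finite_enclosed_comps: "D \<subseteq> H \<Longrightarrow> finite (enclosed_comps G D)"
  by (rule finite_subset[of _ "Pow H"]) (auto simp: enclosed_comps_def finite_hes)

end

locale disjoint_deletions =
  fgraph_wf G + del1: vertex_deletion G D1 + del2: vertex_deletion G D2 for G D1 D2 +
  assumes disjoint: "D1 \<inter> D2 = {}"
begin

sublocale Both: vertex_deletion G "D1 \<union> D2"
  by unfold_locales (use del1.del_subset del2.del_subset del1.del_closed del2.del_closed in blast)+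

sublocale Second: vertex_deletion "r2_result G D1" D2
  by unfold_locales (use del2.del_subset del2.del_closed disjoint in auto)

lemma next_outside_r2_result_aux:
  assumes "x \<in> H" "x \<notin> D1" "0 < n" "(succ ^^ n) x \<notin> D1 \<union> D2"
    "\<And>j. 0 < j \<Longrightarrow> j < n \<Longrightarrow> (succ ^^ j) x \<in> D1 \<union> D2"
  shows "next_outside (r2_result G D1) D2 x = (succ ^^ n) x"
  using assms
proof (induction n arbitrary: x rule: less_induct)
  case (less n)
  obtain j where j: "0 < j" "(succ ^^ j) x \<notin> D1" "\<And>i. 0 < i \<Longrightarrow> i < j \<Longrightarrow> (succ ^^ i) x \<in> D1"
      "next_outside G D1 x = (succ ^^ j) x"
    using next_outside_exists[OF del1.exit_del[OF less.prems(1,2)]] by blast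
  have "j \<le> n" using j(3) less.prems(3,4) by (meson UnCI not_le)
  let ?y = "(succ ^^ j) x"
  have y: "?y \<in> H" "?y \<notin> D1" using j succ_pow_in less.prems by auto
  have succ_x: "del1.R.succ x = ?y" using del1.strand_succ_r2_result less.prems j(4) by simp
  show ?case
  proof (cases "j = n")
    case True
    then show ?thesis using next_outside_succ_notin succ_x less.prems(4) by (metis UnCI)
  next
    case False
    then have "j < n" using \<open>j \<le> n\<close> by simp
    have "?y \<in> D2" using less.prems(5) j(1) \<open>j < n\<close> y(2) by blast
    have "(succ ^^ n) x \<in> del1.R.strand x"
      using del1.strand_r2_result less.prems succ_pow_in_strand by auto
    then obtain k where "(del1.R.succ ^^ k) x = (succ ^^ n) x" unfolding del1.R.strand_def by auto
    then have "\<exists>m>0. (del1.R.succ ^^ m) x \<notin> D2"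
      using del1.R.succ_pow_exit[of x k D2] less.prems by simp
    then have "next_outside (r2_result G D1) D2 x = next_outside (r2_result G D1) D2 ?y"
      using next_outside_succ_in succ_x \<open>?y \<in> D2\<close> by metis
    also have "\<dots> = (succ ^^ (n - j)) ?y"
    proof (rule less.IH)
      show "(succ ^^ i) ?y \<in> D1 \<union> D2" if "0 < i" "i < n - j" for i
        using less.prems(5)[of "i + j"] that by (simp add: funpow_add)
    qed (use y j(1) \<open>j < n\<close> less.prems(4) funpow_diff_apply[OF \<open>j \<le> n\<close>, of succ x] in auto)
    also have "\<dots> = (succ ^^ n) x" using \<open>j \<le> n\<close> by (rule funpow_diff_apply)
    finally show ?thesis .
  qed
qed

lemma next_outside_r2_result:
  assumes "x \<in> H" "x \<notin> D1 \<union> D2"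
  shows "next_outside (r2_result G D1) D2 x = next_outside G (D1 \<union> D2) x"
proof -
  obtain n where "0 < n" "(succ ^^ n) x \<notin> D1 \<union> D2"
      "\<And>j. 0 < j \<Longrightarrow> j < n \<Longrightarrow> (succ ^^ j) x \<in> D1 \<union> D2"
      "next_outside G (D1 \<union> D2) x = (succ ^^ n) x"
    using next_outside_exists[OF Both.exit_del[OF assms]] by blast
  then show ?thesis using next_outside_r2_result_aux assms by simp
qed

text \<open>A component enclosed in D1 \<union> D2 but not in D1 survives the first deletion and is
  enclosed in D2 afterwards.\<close>

lemma bij_betw_enclosed_comps:
  "bij_betw (\<lambda>K. K - D1) {K \<in> enclosed_comps G (D1 \<union> D2). \<not> K \<subseteq> D1}
     (enclosed_comps (r2_result G D1) D2)"
proof (rule bij_betw_imageI)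
  show "inj_on (\<lambda>K. K - D1) {K \<in> enclosed_comps G (D1 \<union> D2). \<not> K \<subseteq> D1}"
  proof (rule inj_onI)
    fix K K' assume K: "K \<in> {K \<in> enclosed_comps G (D1 \<union> D2). \<not> K \<subseteq> D1}"
      and K': "K' \<in> {K \<in> enclosed_comps G (D1 \<union> D2). \<not> K \<subseteq> D1}" and "K - D1 = K' - D1"
    obtain z where z: "z \<in> K" "z \<notin> D1" using K by blast
    then have "z \<in> K'" using \<open>K - D1 = K' - D1\<close> by blast
    moreover obtain x x' where "K = fg_comp G x" "K' = fg_comp G x'"
      using K K' unfolding enclosed_comps_def by blast
    ultimately show "K = K'" using z comp_eq_if_mem by metis
  qed
  show "(\<lambda>K. K - D1) ` {K \<in> enclosed_comps G (D1 \<union> D2). \<not> K \<subseteq> D1} =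
      enclosed_comps (r2_result G D1) D2"
  proof (intro equalityI subsetI)
    fix L assume "L \<in> (\<lambda>K. K - D1) ` {K \<in> enclosed_comps G (D1 \<union> D2). \<not> K \<subseteq> D1}"
    then obtain K x where K: "L = K - D1" "K = fg_comp G x" "K \<subseteq> D1 \<union> D2" "\<not> K \<subseteq> D1"
      unfolding enclosed_comps_def by blast
    then obtain z where z: "z \<in> K" "z \<notin> D1" by blast
    then have "z \<in> D2" "z \<in> H" using K del2.del_subset by auto
    moreover have "fg_comp (r2_result G D1) z = L"
      using del1.comp_r2_result[OF \<open>z \<in> H\<close> z(2)] comp_eq_if_mem z(1) K(1,2) by simp
    ultimately show "L \<in> enclosed_comps (r2_result G D1) D2"
      unfolding enclosed_comps_def using K by blast
  next
    fix L assume "L \<in> enclosed_comps (r2_result G D1) D2"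
    then obtain z where z: "L = fg_comp (r2_result G D1) z" "z \<in> D2" "L \<subseteq> D2"
      unfolding enclosed_comps_def by blast
    then have zH: "z \<in> H" "z \<notin> D1" using del2.del_subset disjoint by auto
    then have L: "L = fg_comp G z - D1" using del1.comp_r2_result z by simp
    have "fg_comp G z \<in> {K \<in> enclosed_comps G (D1 \<union> D2). \<not> K \<subseteq> D1}"
      unfolding enclosed_comps_def using L z(2,3) comp_self zH by blast
    then show "L \<in> (\<lambda>K. K - D1) ` {K \<in> enclosed_comps G (D1 \<union> D2). \<not> K \<subseteq> D1}"
      using L by blast
  qed
qed

lemma card_enclosed_comps_Un:
  "card (enclosed_comps G (D1 \<union> D2)) =
     card (enclosed_comps G D1) + card (enclosed_comps (r2_result G D1) D2)"
proof -
  let ?X = "{K \<in> enclosed_comps G (D1 \<union> D2). \<not> K \<subseteq> D1}"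
  have "enclosed_comps G (D1 \<union> D2) = enclosed_comps G D1 \<union> ?X"
    unfolding enclosed_comps_def using comp_self by blast
  moreover have "enclosed_comps G D1 \<inter> ?X = {}" unfolding enclosed_comps_def by blast
  moreover have "finite (enclosed_comps G (D1 \<union> D2))"
    using finite_enclosed_comps del1.del_subset del2.del_subset by simp
  ultimately have "card (enclosed_comps G (D1 \<union> D2)) = card (enclosed_comps G D1) + card ?X"
    by (metis card_Un_disjoint finite_Un)
  then show ?thesis using bij_betw_same_card[OF bij_betw_enclosed_comps] by simp
qed

lemma r2_result_r2_result_iso: "fg_iso (r2_result (r2_result G D1) D2) (r2_result G (D1 \<union> D2))"
proof (rule fg_iso_idI)
  show "fg_circ (r2_result (r2_result G D1) D2) = fg_circ (r2_result G (D1 \<union> D2))"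
    using card_enclosed_comps_Un by (simp add: fg_circ_r2_result)
  fix h assume "h \<in> fg_hes (r2_result (r2_result G D1) D2)"
  then have h: "h \<in> H" "h \<notin> D1 \<union> D2" by auto
  then have "opp h \<in> H" "opp h \<notin> D1 \<union> D2" using opp_in Both.opp_in_del_iff by auto
  then show "fg_ed (r2_result (r2_result G D1) D2) h = fg_ed (r2_result G (D1 \<union> D2)) h"
    using Second.r2_result_ed Both.r2_result_ed next_outside_r2_result h by simp
qed auto

end

section \<open>Isomorphisms\<close>

locale fg_iso_map = src: fgraph_wf G + tgt: fgraph_wf G' for G G' +
  fixes f :: "nat \<Rightarrow> nat"
  assumes bij: "bij_betw f (fg_hes G) (fg_hes G')"
    and f_ed: "h \<in> fg_hes G \<Longrightarrow> f (fg_ed G h) = fg_ed G' (f h)"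
    and f_opp: "h \<in> fg_hes G \<Longrightarrow> f (fg_opp G h) = fg_opp G' (f h)"
    and f_vx_iff: "h \<in> fg_hes G \<Longrightarrow> h' \<in> fg_hes G \<Longrightarrow>
      fg_vx G h = fg_vx G h' \<longleftrightarrow> fg_vx G' (f h) = fg_vx G' (f h')"
begin

lemma f_in: "x \<in> fg_hes G \<Longrightarrow> f x \<in> fg_hes G'"
  using bij bij_betwE by blast

lemma f_eq_iff: "x \<in> fg_hes G \<Longrightarrow> y \<in> fg_hes G \<Longrightarrow> f x = f y \<longleftrightarrow> x = y"
  using bij unfolding bij_betw_def inj_on_def by blast

lemma f_in_image_iff: "x \<in> fg_hes G \<Longrightarrow> D \<subseteq> fg_hes G \<Longrightarrow> f x \<in> f ` D \<longleftrightarrow> x \<in> D"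
  using f_eq_iff by blast

lemma f_succ_pow: "x \<in> fg_hes G \<Longrightarrow> f ((src.succ ^^ n) x) = (tgt.succ ^^ n) (f x)"
  by (induction n) (simp_all add: strand_succ_def f_ed f_opp src.opp_in src.succ_pow_in)

lemma f_next_outside:
  assumes "D \<subseteq> fg_hes G" "x \<in> fg_hes G" "\<exists>n>0. (src.succ ^^ n) x \<notin> D"
  shows "f (next_outside G D x) = next_outside G' (f ` D) (f x)"
proof -
  obtain n where n: "0 < n" "(src.succ ^^ n) x \<notin> D"
      "\<And>j. 0 < j \<Longrightarrow> j < n \<Longrightarrow> (src.succ ^^ j) x \<in> D" "next_outside G D x = (src.succ ^^ n) x"
    using next_outside_exists[OF assms(3)] by blast
  have "next_outside G' (f ` D) (f x) = (tgt.succ ^^ n) (f x)"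
  proof (rule next_outside_eqI)
    show "(tgt.succ ^^ n) (f x) \<notin> f ` D"
      using n(2) f_succ_pow[OF assms(2), of n]
        f_in_image_iff[OF src.succ_pow_in[OF assms(2)] assms(1)] by metis
    show "(tgt.succ ^^ j) (f x) \<in> f ` D" if "0 < j" "j < n" for j
      using n(3)[OF that] f_succ_pow[OF assms(2), of j] by (metis imageI)
  qed (rule n(1))
  then show ?thesis using n f_succ_pow[OF assms(2)] by simp
qed

lemma f_comp: assumes "x \<in> fg_hes G" shows "f ` fg_comp G x = fg_comp G' (f x)"
proof -
  have strand: "f ` src.strand x = tgt.strand (f x)"
    unfolding src.strand_def tgt.strand_def using f_succ_pow[OF assms] by (auto simp: image_image)
  have "f ` (fg_opp G ` src.strand x) = fg_opp G' ` (f ` src.strand x)"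
    using f_opp src.strand_subset[OF assms] by (force simp: image_image)
  then show ?thesis
    using src.comp_eq_strands[OF assms] tgt.comp_eq_strands[OF f_in[OF assms]] strand
    by (simp add: image_Un)
qed

lemma enclosed_comps_image:
  assumes "D \<subseteq> fg_hes G" shows "enclosed_comps G' (f ` D) = image f ` enclosed_comps G D"
proof (intro equalityI subsetI)
  fix K assume "K \<in> enclosed_comps G' (f ` D)"
  then obtain x where x: "x \<in> D" "K = fg_comp G' (f x)" "K \<subseteq> f ` D"
    unfolding enclosed_comps_def by blast
  then have K: "K = f ` fg_comp G x" using f_comp assms by auto
  have "fg_comp G x \<subseteq> D"
    using K x(3) src.comp_subset[of x] f_in_image_iff[OF _ assms] x(1) assms by blast
  then show "K \<in> image f ` enclosed_comps G D" unfolding enclosed_comps_def using K x(1) by blast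
next
  fix K assume "K \<in> image f ` enclosed_comps G D"
  then show "K \<in> enclosed_comps G' (f ` D)"
    unfolding enclosed_comps_def using f_comp assms by fastforce
qed

lemma card_enclosed_comps_image:
  assumes "D \<subseteq> fg_hes G" shows "card (enclosed_comps G' (f ` D)) = card (enclosed_comps G D)"
proof -
  have "inj_on (image f) (Pow (fg_hes G))"
    using bij inj_on_image_Pow unfolding bij_betw_def by blast
  moreover have "enclosed_comps G D \<subseteq> Pow (fg_hes G)"
    unfolding enclosed_comps_def using assms src.comp_subset by blast
  ultimately show ?thesis
    using enclosed_comps_image[OF assms] card_image inj_on_subset by metis
qed

lemma fg_iso: "fg_circ G = fg_circ G' \<Longrightarrow> fg_iso G G'"
  unfolding fg_iso_def using bij f_ed f_opp f_vx_iff by blast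

lemma vertex_deletion_image:
  assumes "vertex_deletion G D" shows "vertex_deletion G' (f ` D)"
proof -
  interpret src_del: vertex_deletion G D by fact
  show ?thesis
  proof unfold_locales
    show "f ` D \<subseteq> fg_hes G'" using src_del.del_subset f_in by blast
    fix h h' assume h: "h \<in> f ` D" "h' \<in> fg_hes G'" "fg_vx G' h' = fg_vx G' h"
    obtain x where x: "x \<in> D" "h = f x" using h(1) by blast
    obtain x' where x': "x' \<in> fg_hes G" "h' = f x'" using bij h(2)
      by (metis bij_betw_imp_surj_on imageE)
    have "x \<in> fg_hes G" using x(1) src_del.del_subset by blast
    moreover have "fg_vx G' (f x') = fg_vx G' (f x)" using h(3) x(2) x'(2) by simp
    ultimately have "fg_vx G x' = fg_vx G x" using f_vx_iff[OF x'(1)] by blast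
    then have "x' \<in> D" by (rule src_del.del_closed[OF x(1) x'(1)])
    then show "h' \<in> f ` D" unfolding x'(2) by (rule imageI)
  qed
qed

lemma fg_iso_map_r2_result:
  assumes "vertex_deletion G D" shows "fg_iso_map (r2_result G D) (r2_result G' (f ` D)) f"
proof -
  interpret src_del: vertex_deletion G D by fact
  interpret tgt_del: vertex_deletion G' "f ` D" by (rule vertex_deletion_image[OF assms])
  show ?thesis
  proof (intro fg_iso_map.intro fg_iso_map_axioms.intro)
    show "fgraph_wf (r2_result G D)" by (rule src_del.R.fgraph_wf_axioms)
    show "fgraph_wf (r2_result G' (f ` D))" by (rule tgt_del.R.fgraph_wf_axioms)
    have "inj_on f (fg_hes G)" using bij by (simp add: bij_betw_def)
    then have "f ` (fg_hes G - D) = f ` fg_hes G - f ` D"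
      using src_del.del_subset by (simp add: inj_on_image_set_diff)
    then have "f ` (fg_hes G - D) = fg_hes G' - f ` D" using bij by (simp add: bij_betw_def)
    then show "bij_betw f (fg_hes (r2_result G D)) (fg_hes (r2_result G' (f ` D)))"
      using bij_betw_subset[OF bij, of "fg_hes G - D"] by simp
  next
    fix h assume "h \<in> fg_hes (r2_result G D)"
    then have h: "h \<in> fg_hes G" "h \<notin> D" by auto
    then have oh: "fg_opp G h \<in> fg_hes G" "fg_opp G h \<notin> D"
      using src.opp_in src_del.opp_in_del_iff by auto
    have "f h \<notin> f ` D" using h f_in_image_iff src_del.del_subset by blast
    then show "f (fg_ed (r2_result G D) h) = fg_ed (r2_result G' (f ` D)) (f h)"
      using src_del.r2_result_ed[OF h] tgt_del.r2_result_ed f_in[OF h(1)] f_opp[OF h(1)]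
        f_next_outside[OF src_del.del_subset oh(1) src_del.exit_del[OF oh]] by simp
    show "f (fg_opp (r2_result G D) h) = fg_opp (r2_result G' (f ` D)) (f h)"
      using f_opp h by simp
    fix h' assume "h' \<in> fg_hes (r2_result G D)"
    then show "fg_vx (r2_result G D) h = fg_vx (r2_result G D) h' \<longleftrightarrow>
        fg_vx (r2_result G' (f ` D)) (f h) = fg_vx (r2_result G' (f ` D)) (f h')"
      using f_vx_iff h by simp
  qed
qed

lemma r2_result_iso:
  assumes "fg_circ G = fg_circ G'" and "vertex_deletion G D"
  shows "fg_iso (r2_result G D) (r2_result G' (f ` D))"
  using fg_iso_map.fg_iso[OF fg_iso_map_r2_result[OF assms(2)]] assms(1)
    card_enclosed_comps_image[OF vertex_deletion.del_subset[OF assms(2)]]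
  by (simp add: fg_circ_r2_result)

lemma r2_site_image:
  assumes "r2_site G a1 a2 b1 b2"
  shows "r2_site G' (f a1) (f a2) (f b1) (f b2)"
    and "r2_del G' (f a1) (f a2) (f b1) (f b2) = f ` r2_del G a1 a2 b1 b2"
proof -
  have in4: "a1 \<in> fg_hes G" "a2 \<in> fg_hes G" "b1 \<in> fg_hes G" "b2 \<in> fg_hes G"
    using assms unfolding r2_site_def by auto
  then have "fg_opp G a1 \<in> fg_hes G" "fg_opp G b1 \<in> fg_hes G" using src.opp_in by auto
  then show "r2_site G' (f a1) (f a2) (f b1) (f b2)"
    using assms in4 tgt.wf f_in f_vx_iff f_ed f_eq_iff f_opp unfolding r2_site_def
    by (metis empty_subsetI insert_subset)
  show "r2_del G' (f a1) (f a2) (f b1) (f b2) = f ` r2_del G a1 a2 b1 b2"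
    unfolding r2_del_def using f_opp in4 by simp
qed

end

lemma fg_iso_map_of_iso:
  "fg_iso G G' \<Longrightarrow> fg_wf G \<Longrightarrow> fg_wf G' \<Longrightarrow> \<exists>f. fg_iso_map G G' f"
  unfolding fg_iso_def fg_iso_map_def fg_iso_map_axioms_def fgraph_wf_def by blast

lemma fg_iso_circ: "fg_iso G G' \<Longrightarrow> fg_circ G = fg_circ G'"
  unfolding fg_iso_def by blast

lemma fg_iso_refl: "fg_iso G G"
  unfolding fg_iso_def by (intro conjI exI[of _ id]) auto

lemma fg_iso_sym: assumes "fg_iso G G'" "fg_wf G" "fg_wf G'" shows "fg_iso G' G"
proof -
  obtain f where "fg_iso_map G G' f" using fg_iso_map_of_iso assms by blast
  then interpret fg_iso_map G G' f .
  let ?g = "the_inv_into (fg_hes G) f"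
  have g: "bij_betw ?g (fg_hes G') (fg_hes G)" using bij bij_betw_the_inv_into by blast
  have fg: "f (?g y) = y" if "y \<in> fg_hes G'" for y using that bij f_the_inv_into_f_bij_betw by metis
  have gf: "?g (f x) = x" if "x \<in> fg_hes G" for x using that bij the_inv_into_f_f bij_betw_def by metis
  have g_in: "?g y \<in> fg_hes G" if "y \<in> fg_hes G'" for y using g that bij_betwE by blast
  show ?thesis unfolding fg_iso_def
  proof (intro conjI exI[of _ ?g] ballI)
    show "fg_circ G' = fg_circ G" using fg_iso_circ assms by simp
    fix h assume h: "h \<in> fg_hes G'"
    show "?g (fg_ed G' h) = fg_ed G (?g h)"
      using f_ed[OF g_in[OF h]] fg[OF h] gf src.ed_in g_in[OF h] by metis
    show "?g (fg_opp G' h) = fg_opp G (?g h)"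
      using f_opp[OF g_in[OF h]] fg[OF h] gf src.opp_in g_in[OF h] by metis
    fix h' assume h': "h' \<in> fg_hes G'"
    show "fg_vx G' h = fg_vx G' h' \<longleftrightarrow> fg_vx G (?g h) = fg_vx G (?g h')"
      using f_vx_iff[OF g_in[OF h] g_in[OF h']] fg h h' by simp
  qed (rule g)
qed

lemma fg_iso_trans: assumes "fg_iso A B" "fg_iso B C" shows "fg_iso A C"
proof -
  obtain f where f: "bij_betw f (fg_hes A) (fg_hes B)"
    "\<forall>h\<in>fg_hes A. f (fg_ed A h) = fg_ed B (f h)" "\<forall>h\<in>fg_hes A. f (fg_opp A h) = fg_opp B (f h)"
    "\<forall>h\<in>fg_hes A. \<forall>h'\<in>fg_hes A. fg_vx A h = fg_vx A h' \<longleftrightarrow> fg_vx B (f h) = fg_vx B (f h')"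
    using assms(1) unfolding fg_iso_def by blast
  obtain g where g: "bij_betw g (fg_hes B) (fg_hes C)"
    "\<forall>h\<in>fg_hes B. g (fg_ed B h) = fg_ed C (g h)" "\<forall>h\<in>fg_hes B. g (fg_opp B h) = fg_opp C (g h)"
    "\<forall>h\<in>fg_hes B. \<forall>h'\<in>fg_hes B. fg_vx B h = fg_vx B h' \<longleftrightarrow> fg_vx C (g h) = fg_vx C (g h')"
    using assms(2) unfolding fg_iso_def by blast
  have "f h \<in> fg_hes B" if "h \<in> fg_hes A" for h using f(1) that bij_betwE by blast
  then show ?thesis unfolding fg_iso_def
    using assms f g fg_iso_circ bij_betw_trans[OF f(1) g(1)] by (intro conjI exI[of _ "g \<circ> f"]) auto
qed

section \<open>Decreasing moves\<close>

lemma r2_site_wf: "r2_site G a1 a2 b1 b2 \<Longrightarrow> fg_wf G"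
  unfolding r2_site_def by blast

lemma r2_site_vertex_deletion:
  assumes "r2_site G a1 a2 b1 b2" shows "vertex_deletion G (r2_del G a1 a2 b1 b2)"
proof -
  interpret fgraph_wf G by (rule fgraph_wf.intro[OF r2_site_wf[OF assms]])
  show ?thesis by unfold_locales (auto simp: r2_del_eq[OF assms])
qed

lemma r2_site_swap: assumes "r2_site G a1 a2 b1 b2" shows "r2_site G b1 b2 a1 a2"
proof -
  interpret fgraph_wf G by (rule fgraph_wf.intro[OF r2_site_wf[OF assms]])
  have "b1 \<noteq> b2" "ed b1 = a1" "ed b2 = a2"
    using assms unfolding r2_site_def by (metis ed_ed insert_subset)+
  then show ?thesis using assms unfolding r2_site_def by auto
qed

lemma r2_del_swap: "r2_del G b1 b2 a1 a2 = r2_del G a1 a2 b1 b2"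
  unfolding r2_del_def by auto

lemma r2dec_wf: assumes "r2dec G G1" shows "fg_wf G" "fg_wf G1"
proof -
  obtain a1 a2 b1 b2 where s: "r2_site G a1 a2 b1 b2" "G1 = r2_result G (r2_del G a1 a2 b1 b2)"
    using assms unfolding r2dec_def by blast
  show "fg_wf G" using r2_site_wf[OF s(1)] .
  show "fg_wf G1"
    using vertex_deletion.r2_result_wf[OF r2_site_vertex_deletion[OF s(1)]] s(2) by simp
qed

lemma r2dec_card_less: assumes "r2dec G G1" shows "card (fg_hes G1) < card (fg_hes G)"
proof -
  obtain a1 a2 b1 b2 where s: "r2_site G a1 a2 b1 b2" "G1 = r2_result G (r2_del G a1 a2 b1 b2)"
    using assms unfolding r2dec_def by blast
  interpret fgraph_wf G by (rule fgraph_wf.intro[OF r2_site_wf[OF s(1)]])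
  have "a1 \<in> r2_del G a1 a2 b1 b2" "a1 \<in> H" using s(1) unfolding r2_del_def r2_site_def by auto
  then have "H - r2_del G a1 a2 b1 b2 \<subset> H" by blast
  then show ?thesis using s(2) psubset_card_mono[OF finite_hes] by (simp add: r2_result_def)
qed

lemma r2dec_circ_mono: "r2dec G G1 \<Longrightarrow> fg_circ G \<le> fg_circ G1"
  unfolding r2dec_def by (auto simp: fg_circ_r2_result)

lemma r2dec_iso:
  assumes "fg_iso G G'" "fg_wf G'" "r2dec G G1"
  obtains G1' where "r2dec G' G1'" "fg_iso G1 G1'"
proof -
  obtain a1 a2 b1 b2 where s: "r2_site G a1 a2 b1 b2" "G1 = r2_result G (r2_del G a1 a2 b1 b2)"
    using assms unfolding r2dec_def by blast
  obtain f where "fg_iso_map G G' f" using fg_iso_map_of_iso assms r2_site_wf[OF s(1)] by blast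
  then interpret fg_iso_map G G' f .
  have "fg_iso G1 (r2_result G' (f ` r2_del G a1 a2 b1 b2))"
    using r2_result_iso[OF fg_iso_circ[OF assms(1)] r2_site_vertex_deletion[OF s(1)]] s(2) by simp
  moreover have "r2dec G' (r2_result G' (f ` r2_del G a1 a2 b1 b2))"
    unfolding r2dec_def using r2_site_image[OF s(1)] by metis
  ultimately show ?thesis using that by blast
qed

section \<open>Local confluence\<close>

text \<open>A site viewed as two vertices joined by two edges: deleting either of its vertices alone
  gives isomorphic graphs. This is what remains of two sites sharing a vertex once that vertex
  is deleted.\<close>

locale bigon = fgraph_wf +
  fixes a1 a2 c1 c2 :: nat
  assumes site: "r2_site G a1 a2 c1 c2"
begin

lemma a_in: "a1 \<in> H" "a2 \<in> H"
  and ed_a: "ed a1 = c1" "ed a2 = c2"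
  and vx_a2: "fg_vx G a2 = fg_vx G a1"
  and vx_c1: "fg_vx G c1 \<noteq> fg_vx G a1"
  and a2_neq: "a2 \<noteq> a1" "a2 \<noteq> opp a1"
  using site unfolding r2_site_def by auto

definition Va :: "nat set" where
  "Va = {h\<in>H. fg_vx G h = fg_vx G a1}"

lemma Va_eq: "Va = {a1, opp a1, a2, opp a2}"
  unfolding Va_def using vertex_eq a_in vx_a2 a2_neq by simp

lemma neq_at_a: "a1 \<noteq> opp a1" "a2 \<noteq> opp a2" "opp a2 \<noteq> a1" "opp a2 \<noteq> opp a1"
    "opp a1 \<noteq> a2" "a2 \<noteq> a1"
  using opp_neq a_in a2_neq opp_opp by metis+

lemma succ_opp_a: "succ (opp a1) = c1" "succ (opp a2) = c2"
  using succ_opp a_in ed_a by auto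

end

text \<open>The two vertices play symmetric roles; the swapped interpretation provides every fact of
  the locale for the vertex of c1 as well.\<close>

sublocale bigon \<subseteq> swapped: bigon G c1 c2 a1 a2
  by (rule bigon.intro[OF fgraph_wf_axioms]) (simp add: bigon_axioms_def r2_site_swap[OF site])

context bigon
begin

abbreviation Vc :: "nat set" where
  "Vc \<equiv> swapped.Va"

lemma neq_across:
  "a1 \<noteq> c1" "a1 \<noteq> opp c1" "a1 \<noteq> c2" "a1 \<noteq> opp c2"
  "opp a1 \<noteq> c1" "opp a1 \<noteq> opp c1" "opp a1 \<noteq> c2" "opp a1 \<noteq> opp c2"
  "a2 \<noteq> c1" "a2 \<noteq> opp c1" "a2 \<noteq> c2" "a2 \<noteq> opp c2"
  "opp a2 \<noteq> c1" "opp a2 \<noteq> opp c1" "opp a2 \<noteq> c2" "opp a2 \<noteq> opp c2"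
proof -
  have "x \<noteq> y" if "x \<in> Va" "y \<in> Vc" for x y
    using that vx_c1 unfolding Va_def swapped.Va_def by auto
  then show "a1 \<noteq> c1" "a1 \<noteq> opp c1" "a1 \<noteq> c2" "a1 \<noteq> opp c2"
    "opp a1 \<noteq> c1" "opp a1 \<noteq> opp c1" "opp a1 \<noteq> c2" "opp a1 \<noteq> opp c2"
    "a2 \<noteq> c1" "a2 \<noteq> opp c1" "a2 \<noteq> c2" "a2 \<noteq> opp c2"
    "opp a2 \<noteq> c1" "opp a2 \<noteq> opp c1" "opp a2 \<noteq> c2" "opp a2 \<noteq> opp c2"
    unfolding Va_eq swapped.Va_eq by blast+
qed

lemmas neqs = neq_at_a swapped.neq_at_a neq_across
  neq_at_a[symmetric] swapped.neq_at_a[symmetric] neq_across[symmetric]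

lemma succ_a_neq: "succ a1 \<noteq> a1" "succ a1 \<noteq> a2" "succ a1 \<noteq> opp a1" "succ a1 \<noteq> c1" "succ a1 \<noteq> c2"
    "succ a2 \<noteq> a1" "succ a2 \<noteq> a2" "succ a2 \<noteq> opp a2" "succ a2 \<noteq> c1" "succ a2 \<noteq> c2"
  using succ_eq_iff[of a1] succ_eq_iff[of a2] a_in swapped.a_in ed_a swapped.ed_a opp_in
    ed_neq[of "opp a1"] ed_neq[of "opp a2"] neqs by auto

lemma next_outside_Va_opp: "next_outside G Va (opp a1) = c1" "next_outside G Va (opp a2) = c2"
  using next_outside_succ_notin[of G "opp a1" Va] next_outside_succ_notin[of G "opp a2" Va]
    succ_opp_a neqs by (simp_all add: Va_eq)

text \<open>Leaving at a1 or a2, a strand re-enters the same vertex only along a loop edge from a1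
  to opp a2 (or from a2 to opp a1), and then leaves along the other edge of the bigon.\<close>

lemma next_outside_Va_a:
  "next_outside G Va a1 = (if succ a1 = opp a2 then c2 else succ a1)"
  "next_outside G Va a2 = (if succ a2 = opp a1 then c1 else succ a2)"
proof -
  note n = neqs and Va = Va_eq
  show "next_outside G Va a1 = (if succ a1 = opp a2 then c2 else succ a1)"
  proof (cases "succ a1 \<in> Va")
    case True
    then have e: "succ a1 = opp a2" using succ_a_neq by (simp add: Va)
    then have "(succ ^^ 1) (succ a1) \<notin> Va" using succ_opp_a n by (simp add: Va)
    from next_outside_succ[OF a_in(1) True this] show ?thesis using e next_outside_Va_opp by simp
  next
    case False then show ?thesis using next_outside_succ_notin[of G a1 Va] n by (auto simp: Va)
  qed
  show "next_outside G Va a2 = (if succ a2 = opp a1 then c1 else succ a2)"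
  proof (cases "succ a2 \<in> Va")
    case True
    then have e: "succ a2 = opp a1" using succ_a_neq by (simp add: Va)
    then have "(succ ^^ 1) (succ a2) \<notin> Va" using succ_opp_a n by (simp add: Va)
    from next_outside_succ[OF a_in(2) True this] show ?thesis using e next_outside_Va_opp by simp
  next
    case False then show ?thesis using next_outside_succ_notin[of G a2 Va] n by (auto simp: Va)
  qed
qed

lemma next_outside_Va: assumes "y \<in> H"
  shows "next_outside G Va y =
    (if succ y \<notin> Va then succ y
     else if succ y = opp a1 then c1 else if succ y = opp a2 then c2
     else if succ y = a1 then (if succ a1 = opp a2 then c2 else succ a1)
     else (if succ a2 = opp a1 then c1 else succ a2))"
proof (cases "succ y \<in> Va")
  case False then show ?thesis using next_outside_succ_notin[of G y Va] by simp
next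
  case True
  note n = neqs and Va = Va_eq
  have "\<exists>k. (succ ^^ k) (succ y) \<notin> Va"
  proof -
    have "succ y = a1 \<or> succ y = opp a1 \<or> succ y = a2 \<or> succ y = opp a2"
      using True by (simp add: Va)
    moreover have "(succ ^^ 2) a1 \<notin> Va \<or> (succ ^^ 1) a1 \<notin> Va"
      using succ_a_neq succ_opp_a n by (auto simp: Va numeral_2_eq_2)
    moreover have "(succ ^^ 2) a2 \<notin> Va \<or> (succ ^^ 1) a2 \<notin> Va"
      using succ_a_neq succ_opp_a n by (auto simp: Va numeral_2_eq_2)
    moreover have "(succ ^^ 1) (opp a1) \<notin> Va" "(succ ^^ 1) (opp a2) \<notin> Va"
      using succ_opp_a n by (auto simp: Va)
    ultimately show ?thesis by metis
  qed
  then have "next_outside G Va y = next_outside G Va (succ y)"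
    using next_outside_succ[OF assms True] by blast
  then show ?thesis using True next_outside_Va_opp next_outside_Va_a by (auto simp: Va)
qed

text \<open>Exchanges the two vertices: each half-edge on an edge of the bigon is swapped with the
  reverse of its partner.\<close>

definition swap :: "nat \<Rightarrow> nat" where
  "swap x =
    (if x = c1 then opp a1 else if x = opp a1 then c1 else if x = opp c1 then a1 else if x = a1 then opp c1
     else if x = c2 then opp a2 else if x = opp a2 then c2 else if x = opp c2 then a2 else if x = a2 then opp c2
     else x)"

lemma swap_swap: "swap (swap x) = x"
  unfolding swap_def using neqs by auto

lemma swap_Va: "x \<in> Va \<Longrightarrow> swap x \<in> Vc"
  and swap_Vc: "x \<in> Vc \<Longrightarrow> swap x \<in> Va"
  and swap_id: "x \<notin> Va \<Longrightarrow> x \<notin> Vc \<Longrightarrow> swap x = x"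
  unfolding swap_def Va_eq swapped.Va_eq using neqs by auto

sublocale del_a: vertex_deletion G Va
  by unfold_locales (auto simp: Va_def)

lemma enclosed_comps_Va: "enclosed_comps G Va = {}"
proof -
  have "c1 \<in> fg_comp G a1" "c2 \<in> fg_comp G a2"
    using succ_in_comp[OF opp_in[OF a_in(1)]] succ_in_comp[OF opp_in[OF a_in(2)]] succ_opp_a
      comp_eq_if_mem opp_in_comp a_in by metis+
  moreover have "c1 \<notin> Va" "c2 \<notin> Va" using neqs by (auto simp: Va_eq)
  moreover have "fg_comp G (opp a1) = fg_comp G a1" "fg_comp G (opp a2) = fg_comp G a2"
    using comp_eq_if_mem opp_in_comp a_in by blast+
  ultimately have "\<not> fg_comp G x \<subseteq> Va" if "x \<in> Va" for x
    using that by (auto simp: Va_eq)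
  then show ?thesis unfolding enclosed_comps_def by blast
qed

end

context bigon
begin

lemma swap_next_outside: assumes "x \<in> H" "x \<notin> Va"
  shows "swap (next_outside G Va x) = next_outside G Vc (swap x)"
proof -
  note facts = neqs succ_a_neq swapped.succ_a_neq succ_opp_a swapped.succ_opp_a
    Va_eq swapped.Va_eq swap_def
  show ?thesis
  proof (cases "x \<in> Vc")
    case False
    have "succ x \<noteq> a1" "succ x \<noteq> a2" "succ x \<noteq> c1" "succ x \<noteq> c2"
      using inj_onD[OF inj_on_succ] assms False opp_in a_in swapped.a_in succ_opp_a swapped.succ_opp_a
      by (metis Va_eq swapped.Va_eq insertCI)+
    then show ?thesis
      unfolding swap_id[OF assms(2) False] next_outside_Va[OF assms(1)]
        swapped.next_outside_Va[OF assms(1)]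
      using facts by auto
  next
    case True
    then consider "x = c1" | "x = c2" | "x = opp c1" | "x = opp c2" by (auto simp: swapped.Va_eq)
    then show ?thesis
    proof cases
      case 1 show ?thesis
        unfolding 1 next_outside_Va[OF swapped.a_in(1)] using swapped.next_outside_Va[OF opp_in[OF a_in(1)]] facts
        by auto
    next
      case 2 show ?thesis
        unfolding 2 next_outside_Va[OF swapped.a_in(2)] using swapped.next_outside_Va[OF opp_in[OF a_in(2)]] facts
        by auto
    next
      case 3 show ?thesis
        unfolding 3 next_outside_Va[OF opp_in[OF swapped.a_in(1)]] using swapped.next_outside_Va[OF a_in(1)] facts
        by auto
    next
      case 4 show ?thesis
        unfolding 4 next_outside_Va[OF opp_in[OF swapped.a_in(2)]] using swapped.next_outside_Va[OF a_in(2)] facts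
        by auto
    qed
  qed
qed

lemma swap_opp: assumes "h \<in> H" "h \<notin> Va" shows "swap (opp h) = opp (swap h)"
proof (cases "h \<in> Vc")
  case True
  then have "h = c1 \<or> h = opp c1 \<or> h = c2 \<or> h = opp c2" by (simp add: swapped.Va_eq)
  then show ?thesis using neqs a_in swapped.a_in opp_opp unfolding swap_def by auto
next
  case False
  then have "opp h \<notin> Va" "opp h \<notin> Vc"
    using del_a.opp_in_del_iff swapped.del_a.opp_in_del_iff assms by auto
  then show ?thesis using swap_id assms False by simp
qed

lemma Va_Vc_disjoint: "Va \<inter> Vc = {}"
  using vx_c1 by (auto simp: Va_def swapped.Va_def)

lemma swap_in_Va: assumes "h \<in> H - Va" shows "swap h \<in> H - Vc"
proof (cases "h \<in> Vc")
  case True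
  then show ?thesis using swap_Vc[OF True] Va_Vc_disjoint del_a.del_subset by blast
qed (use swap_id assms in simp)

lemma swap_in_Vc: assumes "h \<in> H - Vc" shows "swap h \<in> H - Va"
proof (cases "h \<in> Va")
  case True
  then show ?thesis using swap_Va[OF True] Va_Vc_disjoint swapped.del_a.del_subset by blast
qed (use swap_id assms in simp)

lemma r2_result_Va_iso: "fg_iso (r2_result G Va) (r2_result G Vc)"
proof -
  interpret res: fg_iso_map "r2_result G Va" "r2_result G Vc" swap
  proof (intro fg_iso_map.intro fg_iso_map_axioms.intro)
    show "fgraph_wf (r2_result G Va)" by (rule del_a.R.fgraph_wf_axioms)
    show "fgraph_wf (r2_result G Vc)" by (rule swapped.del_a.R.fgraph_wf_axioms)
    show "bij_betw swap (fg_hes (r2_result G Va)) (fg_hes (r2_result G Vc))"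
      using bij_betw_byWitness[of "H - Va" swap swap "H - Vc"] swap_swap swap_in_Va swap_in_Vc
      by auto
  next
    fix h assume "h \<in> fg_hes (r2_result G Va)"
    then have h: "h \<in> H" "h \<notin> Va" by auto
    then have oh: "opp h \<in> H" "opp h \<notin> Va" using opp_in del_a.opp_in_del_iff by auto
    have sh: "swap h \<in> H" "swap h \<notin> Vc" using swap_in_Va h by auto
    have "swap (fg_ed (r2_result G Va) h) = swap (next_outside G Va (opp h))"
      using del_a.r2_result_ed h by simp
    also have "\<dots> = next_outside G Vc (opp (swap h))"
      using swap_next_outside[OF oh] swap_opp[OF h] by simp
    also have "\<dots> = fg_ed (r2_result G Vc) (swap h)"
      using swapped.del_a.r2_result_ed sh by simp
    finally show "swap (fg_ed (r2_result G Va) h) = fg_ed (r2_result G Vc) (swap h)" .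
    show "swap (fg_opp (r2_result G Va) h) = fg_opp (r2_result G Vc) (swap h)"
      using swap_opp h by simp
    fix h' assume "h' \<in> fg_hes (r2_result G Va)"
    then have h': "h' \<in> H" "h' \<notin> Va" by auto
    have "fg_vx G (swap x) = (if x \<in> Vc then fg_vx G a1 else fg_vx G x)" if "x \<in> H" "x \<notin> Va" for x
      using that swap_Vc swap_id by (auto simp: Va_def)
    then show "fg_vx (r2_result G Va) h = fg_vx (r2_result G Va) h' \<longleftrightarrow>
        fg_vx (r2_result G Vc) (swap h) = fg_vx (r2_result G Vc) (swap h')"
      unfolding del_a.r2_result_vx swapped.del_a.r2_result_vx
      using h h' vx_c1 by (auto simp: Va_def swapped.Va_def)
  qed
  show ?thesis
    using res.fg_iso by (simp add: fg_circ_r2_result enclosed_comps_Va swapped.enclosed_comps_Va)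
qed

end

context vertex_deletion
begin

lemma r2_site_r2_result:
  assumes "r2_site G c1 c2 d1 d2" "D \<inter> r2_del G c1 c2 d1 d2 = {}"
  shows "r2_site (r2_result G D) c1 c2 d1 d2"
proof -
  have c: "c1 \<in> H" "c2 \<in> H" "c1 \<notin> D" "c2 \<notin> D" "ed c1 = d1" "ed c2 = d2"
    using assms unfolding r2_site_def r2_del_def by auto
  moreover have "d1 \<notin> D" "d2 \<notin> D" using assms(2) unfolding r2_del_def by auto
  ultimately have "fg_ed (r2_result G D) c1 = d1" "fg_ed (r2_result G D) c2 = d2"
    using r2_result_ed next_outside_succ_notin succ_opp by simp_all
  then show ?thesis using assms r2_result_wf unfolding r2_site_def r2_del_def by auto
qed

lemma r2_del_r2_result: "r2_del (r2_result G D) c1 c2 d1 d2 = r2_del G c1 c2 d1 d2"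
  unfolding r2_del_def by simp

end

lemma r2dec_disjoint_commute:
  assumes s1: "r2_site G a1 a2 b1 b2" and s2: "r2_site G c1 c2 d1 d2"
    and disjoint: "r2_del G a1 a2 b1 b2 \<inter> r2_del G c1 c2 d1 d2 = {}"
  shows "\<exists>K1 K2. r2dec (r2_result G (r2_del G a1 a2 b1 b2)) K1 \<and>
     r2dec (r2_result G (r2_del G c1 c2 d1 d2)) K2 \<and> fg_iso K1 K2"
proof -
  define D1 where "D1 = r2_del G a1 a2 b1 b2"
  define D2 where "D2 = r2_del G c1 c2 d1 d2"
  have "vertex_deletion G D1" "vertex_deletion G D2"
    unfolding D1_def D2_def using r2_site_vertex_deletion s1 s2 by blast+
  moreover have "D1 \<inter> D2 = {}" "D2 \<inter> D1 = {}" using disjoint unfolding D1_def D2_def by blast+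
  ultimately interpret X: disjoint_deletions G D1 D2 + Y: disjoint_deletions G D2 D1
    by (simp_all add: disjoint_deletions_def disjoint_deletions_axioms_def vertex_deletion_def)
  have "r2dec (r2_result G D1) (r2_result (r2_result G D1) D2)"
    unfolding r2dec_def D2_def
    using X.del1.r2_site_r2_result[OF s2] X.del1.r2_del_r2_result disjoint by (metis D1_def)
  moreover have "r2dec (r2_result G D2) (r2_result (r2_result G D2) D1)"
    unfolding r2dec_def D1_def
    using X.del2.r2_site_r2_result[OF s1] X.del2.r2_del_r2_result disjoint by (metis D2_def Int_commute)
  moreover have "fg_iso (r2_result (r2_result G D1) D2) (r2_result (r2_result G D2) D1)"
    using fg_iso_trans[OF X.r2_result_r2_result_iso
        fg_iso_sym[OF Y.r2_result_r2_result_iso Y.Second.r2_result_wf Y.Both.r2_result_wf,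
          unfolded Un_commute[of D2 D1]]] .
  ultimately show ?thesis unfolding D1_def D2_def by blast
qed

lemma shared_vertex_opp:
  assumes s1: "r2_site G a1 a2 b1 b2" and s2: "r2_site G c1 c2 d1 d2"
    and shared: "fg_vx G c1 = fg_vx G b1" and distinct: "fg_vx G d1 \<noteq> fg_vx G a1"
  shows "(c1 = fg_opp G b1 \<and> c2 = fg_opp G b2) \<or> (c1 = fg_opp G b2 \<and> c2 = fg_opp G b1)"
proof -
  interpret fgraph_wf G by (rule fgraph_wf.intro[OF r2_site_wf[OF s1]])
  have a: "a1 \<in> H" "a2 \<in> H" "b1 \<in> H" "b2 \<in> H" "fg_vx G b1 = fg_vx G b2"
    "ed a1 = b1" "ed a2 = b2" "b2 \<noteq> opp b1" "fg_vx G a1 = fg_vx G a2"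
    using s1 unfolding r2_site_def by auto
  have c: "c1 \<in> H" "c2 \<in> H" "fg_vx G c1 = fg_vx G c2" "ed c1 = d1" "ed c2 = d2"
    "fg_vx G d1 = fg_vx G d2" "c1 \<noteq> c2" "c2 \<noteq> opp c1"
    using s2 unfolding r2_site_def by auto
  have "b1 \<noteq> b2" using a s1 unfolding r2_site_def by (metis ed_ed)
  then have "{h\<in>H. fg_vx G h = fg_vx G b1} = {b1, opp b1, b2, opp b2}"
    using vertex_eq[OF a(3,4) a(5)[symmetric] _ a(8)] by simp
  moreover have "c1 \<in> {h\<in>H. fg_vx G h = fg_vx G b1}" "c2 \<in> {h\<in>H. fg_vx G h = fg_vx G b1}"
    using c shared by auto
  moreover have "ed b1 = a1" "ed b2 = a2" using a by auto
  then have "c1 \<noteq> b1" "c1 \<noteq> b2" "c2 \<noteq> b1" "c2 \<noteq> b2"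
    using c distinct a(9) by auto
  ultimately show ?thesis using c(7,8) by auto
qed

text \<open>Once the shared vertex is deleted, the strands through it turn the edges of both sites into
  two edges joining the remaining vertices.\<close>

lemma bigon_after_shared_vertex:
  assumes s1: "r2_site G a1 a2 b1 b2" and s2: "r2_site G c1 c2 d1 d2"
    and shared: "fg_vx G c1 = fg_vx G b1" and distinct: "fg_vx G d1 \<noteq> fg_vx G a1"
  defines "Dv \<equiv> {h \<in> fg_hes G. fg_vx G h = fg_vx G b1}"
    and "e1 \<equiv> fg_ed G (fg_opp G b1)" and "e2 \<equiv> fg_ed G (fg_opp G b2)"
  shows "bigon (r2_result G Dv) a1 a2 e1 e2" and "fg_vx G e1 = fg_vx G d1"
proof -
  interpret fgraph_wf G by (rule fgraph_wf.intro[OF r2_site_wf[OF s1]])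
  interpret V: vertex_deletion G Dv by unfold_locales (auto simp: Dv_def)
  have a: "a1 \<in> H" "a2 \<in> H" "fg_vx G a1 = fg_vx G a2" "fg_vx G a1 \<noteq> fg_vx G b1"
    "ed a1 = b1" "ed a2 = b2" "a1 \<noteq> a2" "a2 \<noteq> opp a1" "fg_vx G b1 = fg_vx G b2"
    using s1 unfolding r2_site_def by auto
  have c: "d1 \<in> H" "d2 \<in> H" "fg_vx G d1 = fg_vx G d2" "d2 \<noteq> opp d1" "fg_vx G c1 \<noteq> fg_vx G d1"
    using s2 unfolding r2_site_def by auto
  have e: "(e1 = d1 \<and> e2 = d2) \<or> (e1 = d2 \<and> e2 = d1)"
    using shared_vertex_opp[OF assms(1-4)] s2 unfolding e1_def e2_def r2_site_def by auto
  have "d1 \<noteq> opp d2" using c opp_opp by metis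
  then have "e2 \<noteq> opp e1" using e c by auto
  show vx_e: "fg_vx G e1 = fg_vx G d1" using e c by auto
  have notin_Dv: "a1 \<notin> Dv" "a2 \<notin> Dv" "e1 \<notin> Dv" "e2 \<notin> Dv"
    unfolding Dv_def using a c vx_e e shared by auto
  have "succ b1 = e1" "succ b2 = e2" unfolding strand_succ_def e1_def e2_def by simp_all
  moreover have "succ (opp a1) = b1" "succ (opp a2) = b2" "b1 \<in> Dv" "b2 \<in> Dv"
    using succ_opp a by (auto simp: Dv_def ed_in)
  ultimately have "next_outside G Dv (opp a1) = e1" "next_outside G Dv (opp a2) = e2"
    using next_outside_succ[of "opp a1" Dv 1] next_outside_succ[of "opp a2" Dv 1]
      next_outside_succ_notin opp_in a notin_Dv by simp_all
  then have "fg_ed (r2_result G Dv) a1 = e1" "fg_ed (r2_result G Dv) a2 = e2"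
    using V.r2_result_ed a notin_Dv by simp_all
  then show "bigon (r2_result G Dv) a1 a2 e1 e2"
    unfolding bigon_def bigon_axioms_def r2_site_def
    using V.R.fgraph_wf_axioms V.r2_result_wf a notin_Dv vx_e e c distinct \<open>e2 \<noteq> opp e1\<close>
    by auto
qed

text \<open>The two moves amount to deleting the shared vertex and then one or the other vertex of
  the bigon it leaves behind.\<close>

lemma r2_result_shared_vertex_iso:
  assumes s1: "r2_site G a1 a2 b1 b2" and s2: "r2_site G c1 c2 d1 d2"
    and shared: "fg_vx G c1 = fg_vx G b1" and distinct: "fg_vx G d1 \<noteq> fg_vx G a1"
  shows "fg_iso (r2_result G (r2_del G a1 a2 b1 b2)) (r2_result G (r2_del G c1 c2 d1 d2))"
proof -
  interpret fgraph_wf G by (rule fgraph_wf.intro[OF r2_site_wf[OF s1]])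
  define Dv where "Dv = {h \<in> H. fg_vx G h = fg_vx G b1}"
  interpret V: vertex_deletion G Dv by unfold_locales (auto simp: Dv_def)
  interpret B: bigon "r2_result G Dv" a1 a2 "ed (opp b1)" "ed (opp b2)"
    using bigon_after_shared_vertex(1)[OF assms] unfolding Dv_def .
  have vx_e: "fg_vx G (ed (opp b1)) = fg_vx G d1" by (rule bigon_after_shared_vertex(2)[OF assms])
  have vx: "fg_vx G a1 \<noteq> fg_vx G b1" "fg_vx G d1 \<noteq> fg_vx G b1"
    using s1 s2 shared unfolding r2_site_def by auto
  have Va: "B.Va = {h\<in>H. fg_vx G h = fg_vx G a1}"
    unfolding B.Va_def V.r2_result_hes V.r2_result_vx using vx by (auto simp: Dv_def)
  have Vc: "B.Vc = {h\<in>H. fg_vx G h = fg_vx G d1}"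
    unfolding B.swapped.Va_def V.r2_result_hes V.r2_result_vx vx_e using vx by (auto simp: Dv_def)
  interpret X: disjoint_deletions G Dv B.Va
    by (unfold_locales; (unfold Va)?; auto simp: Dv_def vx(1))
  interpret Y: disjoint_deletions G Dv B.Vc
    by (unfold_locales; (unfold Vc)?; auto simp: Dv_def vx(2))
  have "r2_del G a1 a2 b1 b2 = Dv \<union> B.Va" unfolding r2_del_eq[OF s1] Va unfolding Dv_def by auto
  moreover have "r2_del G c1 c2 d1 d2 = Dv \<union> B.Vc"
    unfolding r2_del_eq[OF s2] Vc unfolding Dv_def using shared by auto
  moreover have "fg_iso (r2_result G (Dv \<union> B.Va)) (r2_result (r2_result G Dv) B.Va)"
    using fg_iso_sym[OF X.r2_result_r2_result_iso B.del_a.r2_result_wf X.Both.r2_result_wf] .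
  ultimately show ?thesis
    using fg_iso_trans[OF _ B.r2_result_Va_iso] Y.r2_result_r2_result_iso fg_iso_trans by metis
qed

lemma r2_result_iso_one_shared_vertex:
  assumes s1: "r2_site G a1 a2 b1 b2" and s2: "r2_site G c1 c2 d1 d2"
    and "fg_vx G c1 = fg_vx G b1 \<and> fg_vx G d1 \<noteq> fg_vx G a1 \<or>
      fg_vx G c1 = fg_vx G a1 \<and> fg_vx G d1 \<noteq> fg_vx G b1 \<or>
      fg_vx G d1 = fg_vx G b1 \<and> fg_vx G c1 \<noteq> fg_vx G a1 \<or>
      fg_vx G d1 = fg_vx G a1 \<and> fg_vx G c1 \<noteq> fg_vx G b1"
  shows "fg_iso (r2_result G (r2_del G a1 a2 b1 b2)) (r2_result G (r2_del G c1 c2 d1 d2))"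
  using assms(3)
proof (elim disjE conjE)
  assume "fg_vx G c1 = fg_vx G b1" "fg_vx G d1 \<noteq> fg_vx G a1"
  then show ?thesis by (rule r2_result_shared_vertex_iso[OF s1 s2])
next
  assume "fg_vx G c1 = fg_vx G a1" "fg_vx G d1 \<noteq> fg_vx G b1"
  then show ?thesis
    using r2_result_shared_vertex_iso[OF r2_site_swap[OF s1] s2] r2_del_swap by metis
next
  assume "fg_vx G d1 = fg_vx G b1" "fg_vx G c1 \<noteq> fg_vx G a1"
  then show ?thesis
    using r2_result_shared_vertex_iso[OF s1 r2_site_swap[OF s2]] r2_del_swap by metis
next
  assume "fg_vx G d1 = fg_vx G a1" "fg_vx G c1 \<noteq> fg_vx G b1"
  then show ?thesis
    using r2_result_shared_vertex_iso[OF r2_site_swap[OF s1] r2_site_swap[OF s2]] r2_del_swap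
    by metis
qed

lemma r2dec_local_confluence:
  assumes "r2dec G G1" "r2dec G G2"
  shows "\<exists>K1 K2. r2dec\<^sup>*\<^sup>* G1 K1 \<and> r2dec\<^sup>*\<^sup>* G2 K2 \<and> fg_iso K1 K2"
proof -
  obtain a1 a2 b1 b2 where s1: "r2_site G a1 a2 b1 b2" "G1 = r2_result G (r2_del G a1 a2 b1 b2)"
    using assms unfolding r2dec_def by blast
  obtain c1 c2 d1 d2 where s2: "r2_site G c1 c2 d1 d2" "G2 = r2_result G (r2_del G c1 c2 d1 d2)"
    using assms unfolding r2dec_def by blast
  interpret fgraph_wf G by (rule fgraph_wf.intro[OF r2_site_wf[OF s1(1)]])
  define u v p q where "u = fg_vx G a1" "v = fg_vx G b1" "p = fg_vx G c1" "q = fg_vx G d1"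
  have "u \<noteq> v" "p \<noteq> q" using s1 s2 unfolding r2_site_def u_v_p_q_def by auto
  have D1: "r2_del G a1 a2 b1 b2 = {h\<in>H. fg_vx G h = u \<or> fg_vx G h = v}"
    using r2_del_eq[OF s1(1)] u_v_p_q_def by simp
  have D2: "r2_del G c1 c2 d1 d2 = {h\<in>H. fg_vx G h = p \<or> fg_vx G h = q}"
    using r2_del_eq[OF s2(1)] u_v_p_q_def by simp
  consider "{u, v} = {p, q}" | "{u, v} \<inter> {p, q} = {}"
    | "p = v \<and> q \<noteq> u \<or> p = u \<and> q \<noteq> v \<or> q = v \<and> p \<noteq> u \<or> q = u \<and> p \<noteq> v"
    using \<open>u \<noteq> v\<close> \<open>p \<noteq> q\<close> by blast
  then show ?thesis
  proof cases
    case 1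
    then have "r2_del G a1 a2 b1 b2 = r2_del G c1 c2 d1 d2"
      unfolding D1 D2 by (auto simp: doubleton_eq_iff)
    then show ?thesis using s1 s2 fg_iso_refl by auto
  next
    case 2
    then have "r2_del G a1 a2 b1 b2 \<inter> r2_del G c1 c2 d1 d2 = {}" unfolding D1 D2 by auto
    then show ?thesis using r2dec_disjoint_commute[OF s1(1) s2(1)] s1 s2 by blast
  next
    case 3
    then have "fg_iso G1 G2"
      using r2_result_iso_one_shared_vertex[OF s1(1) s2(1)] s1(2) s2(2) unfolding u_v_p_q_def by blast
    then show ?thesis by blast
  qed
qed

section \<open>Irreducible representatives\<close>

interpretation r2: terminating_rewriting_modulo "{G. fg_wf G}" r2dec fg_iso "\<lambda>G. card (fg_hes G)"
proof
  show "r2dec x y \<Longrightarrow> x \<in> {G. fg_wf G} \<and> y \<in> {G. fg_wf G}" for x y using r2dec_wf by blast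
  show "r2dec x y \<Longrightarrow> card (fg_hes y) < card (fg_hes x)" for x y by (rule r2dec_card_less)
  show "fg_iso x x" for x by (rule fg_iso_refl)
  show "fg_iso x y \<Longrightarrow> x \<in> {G. fg_wf G} \<Longrightarrow> y \<in> {G. fg_wf G} \<Longrightarrow> fg_iso y x" for x y
    using fg_iso_sym by blast
  show "fg_iso x y \<Longrightarrow> fg_iso y z \<Longrightarrow> fg_iso x z" for x y z by (rule fg_iso_trans)
  show "fg_iso x x' \<Longrightarrow> x' \<in> {G. fg_wf G} \<Longrightarrow> r2dec x y \<Longrightarrow> \<exists>y'. r2dec x' y' \<and> fg_iso y y'"
    for x x' y using r2dec_iso by blast
  show "r2dec x y1 \<Longrightarrow> r2dec x y2 \<Longrightarrow> \<exists>z1 z2. r2dec\<^sup>*\<^sup>* y1 z1 \<and> r2dec\<^sup>*\<^sup>* y2 z2 \<and> fg_iso z1 z2"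
    for x y1 y2 by (rule r2dec_local_confluence)
qed

lemma r2eq_eq_equiv_steps: "r2eq = r2.equiv_steps"
  unfolding r2eq_def by simp

lemma r2dec_steps_circ_mono: "r2dec\<^sup>*\<^sup>* G N \<Longrightarrow> fg_circ G \<le> fg_circ N"
  by (induction rule: rtranclp_induct) (auto dest: r2dec_circ_mono)

lemma r2_irreducible_representative:
  assumes "fg_wf G"
  obtains R where "fg_wf R" "r2_irreducible R" "r2dec\<^sup>*\<^sup>* G R"
    "\<And>R'. fg_wf R' \<Longrightarrow> r2_irreducible R' \<Longrightarrow> r2eq G R' \<Longrightarrow> fg_iso R R'"
proof -
  obtain R where R: "r2dec\<^sup>*\<^sup>* G R" "r2_irreducible R"
    using r2.normal_form_exists unfolding r2_irreducible_def by blast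
  moreover have "fg_wf R" using r2.steps_in R(1) assms by blast
  moreover have "fg_iso R R'" if "r2_irreducible R'" "r2eq G R'" for R'
    using r2.equiv_steps_normal_form[of G R'] that R assms
    unfolding r2eq_eq_equiv_steps r2_irreducible_def by blast
  ultimately show ?thesis using that by blast
qed

text \<open>Moves never remove free loops, and isomorphic graphs have equally many.\<close>

lemma zero_tilde_iff:
  assumes "fg_wf G" "r2dec\<^sup>*\<^sup>* G R" "r2_irreducible R"
  shows "zero_tilde G \<longleftrightarrow> 0 < fg_circ R"
proof
  assume "zero_tilde G"
  then obtain G' where G': "r2eq G G'" "0 < fg_circ G'" unfolding zero_tilde_def by blast
  obtain R' where R': "r2dec\<^sup>*\<^sup>* G' R'" "r2_irreducible R'"
    using r2.normal_form_exists unfolding r2_irreducible_def by blast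
  have "fg_iso R R'"
    using r2.equiv_steps_normal_form[of G G'] G'(1) R' assms
    unfolding r2eq_eq_equiv_steps r2_irreducible_def by blast
  then show "0 < fg_circ R" using fg_iso_circ r2dec_steps_circ_mono[OF R'(1)] G'(2) by simp
next
  assume "0 < fg_circ R"
  then show "zero_tilde G"
    unfolding zero_tilde_def r2eq_eq_equiv_steps using r2.steps_equiv_steps assms(2) by blast
qed

theorem mainTheorem1:
  shows
   "(\<forall>G. fg_wf G \<and> fg_ucomp G = 1 \<longrightarrow>
       (\<exists>R. fg_wf R \<and> r2_irreducible R \<and> r2dec\<^sup>*\<^sup>* G R \<and>
            (\<forall>R'. fg_wf R' \<and> r2_irreducible R' \<and> r2eq G R' \<longrightarrow> fg_iso R R'))) \<and>
    (\<forall>G. fg_wf G \<longrightarrow>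
       (\<not> zero_tilde G \<longrightarrow>
          (\<exists>R. fg_wf R \<and> r2_irreducible_tilde R \<and> r2dec\<^sup>*\<^sup>* G R \<and>
               (\<forall>R'. fg_wf R' \<and> r2_irreducible_tilde R' \<and> r2eq G R' \<longrightarrow> fg_iso R R'))) \<and>
       (zero_tilde G \<longrightarrow> (\<exists>R. r2dec\<^sup>*\<^sup>* G R \<and> 0 < fg_circ R)) \<and>
       (\<forall>G'. r2dec\<^sup>*\<^sup>* G G' \<and> 0 < fg_circ G' \<longrightarrow> zero_tilde G))"
proof (intro conjI allI impI)
  fix G assume "fg_wf G \<and> fg_ucomp G = 1"
  then obtain R where "fg_wf R" "r2_irreducible R" "r2dec\<^sup>*\<^sup>* G R"
    "\<And>R'. fg_wf R' \<Longrightarrow> r2_irreducible R' \<Longrightarrow> r2eq G R' \<Longrightarrow> fg_iso R R'"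
    using r2_irreducible_representative by blast
  then show "\<exists>R. fg_wf R \<and> r2_irreducible R \<and> r2dec\<^sup>*\<^sup>* G R \<and>
      (\<forall>R'. fg_wf R' \<and> r2_irreducible R' \<and> r2eq G R' \<longrightarrow> fg_iso R R')" by blast
next
  fix G assume G: "fg_wf G"
  obtain R where R: "fg_wf R" "r2_irreducible R" "r2dec\<^sup>*\<^sup>* G R"
    "\<And>R'. fg_wf R' \<Longrightarrow> r2_irreducible R' \<Longrightarrow> r2eq G R' \<Longrightarrow> fg_iso R R'"
    using r2_irreducible_representative[OF G] by blast
  note zero = zero_tilde_iff[OF G R(3,2)]
  show "\<exists>R. fg_wf R \<and> r2_irreducible_tilde R \<and> r2dec\<^sup>*\<^sup>* G R \<and>
      (\<forall>R'. fg_wf R' \<and> r2_irreducible_tilde R' \<and> r2eq G R' \<longrightarrow> fg_iso R R')"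
    if "\<not> zero_tilde G"
    using that zero R unfolding r2_irreducible_tilde_def r2_irreducible_def by blast
  show "\<exists>R. r2dec\<^sup>*\<^sup>* G R \<and> 0 < fg_circ R" if "zero_tilde G" using that zero R by blast
  show "zero_tilde G" if "r2dec\<^sup>*\<^sup>* G G' \<and> 0 < fg_circ G'" for G'
    using that r2.steps_equiv_steps unfolding zero_tilde_def r2eq_eq_equiv_steps by blast
qed

end
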